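(* Let $M=\bigoplus_{\mathbf a\in\mathbb Z^d}M_{\mathbf a}$ be a $\mathbb Z^d$-graded left $D(R_A)$-module (i.e. $D(R_A)_{\mathbf b}M_{\mathbf a}\subseteq M_{\mathbf a+\mathbf b}$) which is simple as a graded module (it has no nonzero proper $\mathbb Z^d$-graded submodules). Then $M$ is isomorphic to $L(\boldsymbol\alpha)$ as a left $D(R_A)$-module for some $\boldsymbol\alpha\in\mathbb C^d$.
   Context: $A\subset\mathbb Z^d$ is a finite set generating the group $\mathbb Z^d$; $R_A=\mathbb C[\mathbb NA]\subseteq\mathbb C[t_1^{\pm1},\dots,t_d^{\pm1}]$; $D(R_A)=\{P\in\mathbb C[t^{\pm1}]\langle\partial_1,\dots,\partial_d\rangle: P(R_A)\subseteq R_A\}$; $s_j=t_j\partial_j$; $D(R_A)_{\mathbf a}=\{P\in D(R_A):[s_j,P]=a_jP\ \forall j\}$, giving $D(R_A)=\bigoplus_{\mathbf a\in\mathbb Z^d}D(R_A)_{\mathbf a}$. $M(\boldsymbol\alpha)=D(R_A)/\sum_iD(R_A)(s_i-\alpha_i)$; in the category $\mathcal O$ of left $D(R_A)$-modules that are direct sums of finite-dimensional weight spaces $M_{\boldsymbol\lambda}=\{x:f(s)x=f(\boldsymbol\lambda)x\ \forall f\in\mathbb C[s]\}$, $M(\boldsymbol\alpha)$ has a unique simple quotient, denoted $L(\boldsymbol\alpha)$. *)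

theory Defs
  imports Complex_Main "HOL-Algebra.Module" "HOL-Algebra.AbelCoset" "HOL-Algebra.FiniteProduct"
begin

text \<open>Lattice points of Z^d are functions 'n \<Rightarrow> int, with 'n a finite index type (d = CARD('n)).\<close>

definition vadd :: "('n \<Rightarrow> int) \<Rightarrow> ('n \<Rightarrow> int) \<Rightarrow> ('n \<Rightarrow> int)" where
  "vadd m b = (\<lambda>j. m j + b j)"

definition vsub :: "('n \<Rightarrow> int) \<Rightarrow> ('n \<Rightarrow> int) \<Rightarrow> ('n \<Rightarrow> int)" where
  "vsub m b = (\<lambda>j. m j - b j)"

definition generates_Zd :: "('n::finite \<Rightarrow> int) set \<Rightarrow> bool" where
  "generates_Zd A \<longleftrightarrow> finite A \<and>
     (\<forall>x. \<exists>z :: ('n \<Rightarrow> int) \<Rightarrow> int. \<forall>j. x j = (\<Sum>a\<in>A. z a * a j))"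

definition semigrp :: "('n \<Rightarrow> int) set \<Rightarrow> ('n \<Rightarrow> int) set" where
  "semigrp A = {m. \<exists>c :: ('n \<Rightarrow> int) \<Rightarrow> nat. \<forall>j. m j = (\<Sum>a\<in>A. int (c a) * a j)}"

definition polyfun :: "(('n::finite \<Rightarrow> int) \<Rightarrow> complex) \<Rightarrow> bool" where
  "polyfun f \<longleftrightarrow> (\<exists>(K :: ('n \<Rightarrow> nat) set) (c :: ('n \<Rightarrow> nat) \<Rightarrow> complex). finite K \<and>
      (\<forall>m. f m = (\<Sum>k\<in>K. c k * (\<Prod>j\<in>UNIV. of_int (m j) ^ k j))))"

text \<open>An operator P in the Laurent Weyl algebra C[t^{\<pm>1}]<\<partial>> is encoded by its kernel:
  P(t^m) = \<Sum>_b P b m * t^(m+b), i.e. P = \<Sum>_b t^b p_b(s) with p_b = P b polynomial.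
  This encoding is bijective (the algebra acts faithfully on C[t^{\<pm>1}]).\<close>
type_synonym 'n kern = "('n \<Rightarrow> int) \<Rightarrow> ('n \<Rightarrow> int) \<Rightarrow> complex"

definition ksupp :: "'n kern \<Rightarrow> ('n \<Rightarrow> int) set" where
  "ksupp P = {b. \<exists>m. P b m \<noteq> 0}"

definition weyl_op :: "('n::finite) kern \<Rightarrow> bool" where
  "weyl_op P \<longleftrightarrow> finite (ksupp P) \<and> (\<forall>b. polyfun (P b))"

text \<open>P(R_A) \<subseteq> R_A, where R_A is spanned by the monomials t^m, m \<in> NA.\<close>
definition preserves :: "('n \<Rightarrow> int) set \<Rightarrow> 'n kern \<Rightarrow> bool" where
  "preserves A P \<longleftrightarrow> (\<forall>m\<in>semigrp A. \<forall>b. P b m \<noteq> 0 \<longrightarrow> vadd m b \<in> semigrp A)"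

text \<open>Composition P \<circ> Q.\<close>
definition kmult :: "'n kern \<Rightarrow> 'n kern \<Rightarrow> 'n kern" where
  "kmult P Q = (\<lambda>e m. \<Sum>b\<in>ksupp Q. Q b m * P (vsub e b) (vadd m b))"

definition DR :: "('n::finite \<Rightarrow> int) set \<Rightarrow> 'n kern ring" where
  "DR A = \<lparr> carrier = {P. weyl_op P \<and> preserves A P},
            mult = kmult,
            one = (\<lambda>b m. if b = (\<lambda>_. 0) then 1 else 0),
            zero = (\<lambda>b m. 0),
            add = (\<lambda>P Q b m. P b m + Q b m) \<rparr>"

text \<open>Scalars and the Euler operators s_j = t_j \<partial>_j.\<close>
definition kscal :: "complex \<Rightarrow> 'n kern" where
  "kscal c = (\<lambda>b m. if b = (\<lambda>_. 0) then c else 0)"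

definition euler :: "'n \<Rightarrow> 'n kern" where
  "euler j = (\<lambda>b m. if b = (\<lambda>_. 0) then of_int (m j) else 0)"

definition Dgr :: "('n::finite \<Rightarrow> int) set \<Rightarrow> ('n \<Rightarrow> int) \<Rightarrow> 'n kern set" where
  "Dgr A a = {P \<in> carrier (DR A). \<forall>j.
      euler j \<otimes>\<^bsub>DR A\<^esub> P \<ominus>\<^bsub>DR A\<^esub> P \<otimes>\<^bsub>DR A\<^esub> euler j = kscal (of_int (a j)) \<otimes>\<^bsub>DR A\<^esub> P}"

text \<open>Left modules over a (not necessarily commutative) ring.\<close>
locale left_module = R?: ring R + M?: abelian_group M for R (structure) and M (structure) +
  assumes lsmult_closed:
      "\<lbrakk>a \<in> carrier R; x \<in> carrier M\<rbrakk> \<Longrightarrow> a \<odot>\<^bsub>M\<^esub> x \<in> carrier M"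
    and lsmult_l_distr:
      "\<lbrakk>a \<in> carrier R; b \<in> carrier R; x \<in> carrier M\<rbrakk> \<Longrightarrow>
      (a \<oplus> b) \<odot>\<^bsub>M\<^esub> x = a \<odot>\<^bsub>M\<^esub> x \<oplus>\<^bsub>M\<^esub> b \<odot>\<^bsub>M\<^esub> x"
    and lsmult_r_distr:
      "\<lbrakk>a \<in> carrier R; x \<in> carrier M; y \<in> carrier M\<rbrakk> \<Longrightarrow>
      a \<odot>\<^bsub>M\<^esub> (x \<oplus>\<^bsub>M\<^esub> y) = a \<odot>\<^bsub>M\<^esub> x \<oplus>\<^bsub>M\<^esub> a \<odot>\<^bsub>M\<^esub> y"
    and lsmult_assoc1:
      "\<lbrakk>a \<in> carrier R; b \<in> carrier R; x \<in> carrier M\<rbrakk> \<Longrightarrow>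
      (a \<otimes> b) \<odot>\<^bsub>M\<^esub> x = a \<odot>\<^bsub>M\<^esub> (b \<odot>\<^bsub>M\<^esub> x)"
    and lsmult_one:
      "x \<in> carrier M \<Longrightarrow> \<one> \<odot>\<^bsub>M\<^esub> x = x"

definition regmod :: "('a, 'b) ring_scheme \<Rightarrow> ('a, 'a) module" where
  "regmod R = \<lparr> carrier = carrier R, mult = mult R, one = one R, zero = zero R,
               add = add R, smult = mult R \<rparr>"

definition quot_module :: "('a, 'b) module \<Rightarrow> 'b set \<Rightarrow> ('a, 'b set) module" where
  "quot_module M N = \<lparr> carrier = a_rcosets\<^bsub>M\<^esub> N, mult = (\<lambda>_ _. undefined), one = undefined,
      zero = N, add = set_add M,
      smult = (\<lambda>r X. N +>\<^bsub>M\<^esub> (r \<odot>\<^bsub>M\<^esub> (SOME x. x \<in> X))) \<rparr>"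

definition verma_ideal :: "('n::finite \<Rightarrow> int) set \<Rightarrow> ('n \<Rightarrow> complex) \<Rightarrow> 'n kern set" where
  "verma_ideal A \<alpha> = {finsum (DR A) (\<lambda>i. P i \<otimes>\<^bsub>DR A\<^esub> (euler i \<ominus>\<^bsub>DR A\<^esub> kscal (\<alpha> i))) UNIV
                       | P. \<forall>i. P i \<in> carrier (DR A)}"

definition verma :: "('n::finite \<Rightarrow> int) set \<Rightarrow> ('n \<Rightarrow> complex) \<Rightarrow> ('n kern, 'n kern set) module" where
  "verma A \<alpha> = quot_module (regmod (DR A)) (verma_ideal A \<alpha>)"

definition maximal_submodule :: "('a, 'c) ring_scheme \<Rightarrow> ('a, 'b) module \<Rightarrow> 'b set \<Rightarrow> bool" where
  "maximal_submodule R M N \<longleftrightarrow> submodule N R M \<and> N \<noteq> carrier M \<and>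
     (\<forall>N'. submodule N' R M \<and> N \<subseteq> N' \<longrightarrow> N' = N \<or> N' = carrier M)"

text \<open>L(\<alpha>): the (unique) simple quotient M(\<alpha>)/N of M(\<alpha>), N the maximal submodule.\<close>

definition module_iso :: "('a, 'c) ring_scheme \<Rightarrow> ('a, 'b) module \<Rightarrow> ('a, 'd) module \<Rightarrow> ('b \<Rightarrow> 'd) \<Rightarrow> bool" where
  "module_iso R M M' f \<longleftrightarrow> bij_betw f (carrier M) (carrier M') \<and>
     (\<forall>x\<in>carrier M. \<forall>y\<in>carrier M. f (x \<oplus>\<^bsub>M\<^esub> y) = f x \<oplus>\<^bsub>M'\<^esub> f y) \<and>
     (\<forall>r\<in>carrier R. \<forall>x\<in>carrier M. f (r \<odot>\<^bsub>M\<^esub> x) = r \<odot>\<^bsub>M'\<^esub> f x)"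

definition graded_module :: "('n::finite \<Rightarrow> int) set \<Rightarrow> ('n kern, 'm) module \<Rightarrow> (('n \<Rightarrow> int) \<Rightarrow> 'm set) \<Rightarrow> bool" where
  "graded_module A M gr \<longleftrightarrow> left_module (DR A) M \<and>
     (\<forall>a. subgroup (gr a) (add_monoid M)) \<and>
     (\<forall>x\<in>carrier M. \<exists>!c. (\<forall>a. c a \<in> gr a) \<and> finite {a. c a \<noteq> \<zero>\<^bsub>M\<^esub>} \<and>
                          x = finsum M c {a. c a \<noteq> \<zero>\<^bsub>M\<^esub>}) \<and>
     (\<forall>a b. \<forall>P\<in>Dgr A b. \<forall>x\<in>gr a. P \<odot>\<^bsub>M\<^esub> x \<in> gr (vadd a b))"

definition graded_submodule :: "('n::finite \<Rightarrow> int) set \<Rightarrow> ('n kern, 'm) module \<Rightarrow> (('n \<Rightarrow> int) \<Rightarrow> 'm set) \<Rightarrow> 'm set \<Rightarrow> bool" where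
  "graded_submodule A M gr N \<longleftrightarrow> submodule N (DR A) M \<and>
     (\<forall>x\<in>N. \<exists>c. (\<forall>a. c a \<in> gr a \<inter> N) \<and> finite {a. c a \<noteq> \<zero>\<^bsub>M\<^esub>} \<and>
                 x = finsum M c {a. c a \<noteq> \<zero>\<^bsub>M\<^esub>})"

definition graded_simple :: "('n::finite \<Rightarrow> int) set \<Rightarrow> ('n kern, 'm) module \<Rightarrow> (('n \<Rightarrow> int) \<Rightarrow> 'm set) \<Rightarrow> bool" where
  "graded_simple A M gr \<longleftrightarrow> graded_module A M gr \<and> carrier M \<noteq> {\<zero>\<^bsub>M\<^esub>} \<and>
     (\<forall>N. graded_submodule A M gr N \<longrightarrow> N = {\<zero>\<^bsub>M\<^esub>} \<or> N = carrier M)"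

end

(*
  A nonzero homogeneous vector of a graded-simple module M generates M, and the operators of
  degree zero, the polynomials in the commuting Euler operators s_j, act on each homogeneous
  component M_a. Since they span a space of countable dimension over the uncountable field C,
  Dixmier's argument shows that each s_j acts on M_a by a scalar; so M contains a weight vector v
  of some weight alpha, and s_j acts on M_b by alpha_j + b_j - a_j. These weights separate
  homogeneous components, so every nonzero submodule of M contains a nonzero homogeneous vector
  and M is simple even as an ungraded module. Finally [P] |-> P v is a well-defined surjection
  M(alpha) -> M; its kernel N is a maximal submodule and M(alpha)/N is isomorphic to M.
*)

theory Submission
  imports Defs
    "HOL-Library.Function_Algebras"
    "HOL-Analysis.Continuum_Not_Denumerable"
    "HOL-Computational_Algebra.Fundamental_Theorem_Algebra"
begin

section \<open>Left modules and quotients by kernels\<close>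

context left_module
begin

lemma lsmult_r_null [simp]:
  assumes "a \<in> carrier R"
  shows "a \<odot>\<^bsub>M\<^esub> \<zero>\<^bsub>M\<^esub> = \<zero>\<^bsub>M\<^esub>"
proof -
  have c: "a \<odot>\<^bsub>M\<^esub> \<zero>\<^bsub>M\<^esub> \<in> carrier M"
    using assms lsmult_closed by simp
  have "a \<odot>\<^bsub>M\<^esub> \<zero>\<^bsub>M\<^esub> \<oplus>\<^bsub>M\<^esub> a \<odot>\<^bsub>M\<^esub> \<zero>\<^bsub>M\<^esub> = a \<odot>\<^bsub>M\<^esub> \<zero>\<^bsub>M\<^esub> \<oplus>\<^bsub>M\<^esub> \<zero>\<^bsub>M\<^esub>"
    using lsmult_r_distr[OF assms, of "\<zero>\<^bsub>M\<^esub>" "\<zero>\<^bsub>M\<^esub>"] c by simp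
  then show ?thesis
    using c by (metis M.add.Units_l_cancel M.add.Units_eq M.zero_closed)
qed

lemma lsmult_l_null [simp]:
  assumes "x \<in> carrier M"
  shows "\<zero> \<odot>\<^bsub>M\<^esub> x = \<zero>\<^bsub>M\<^esub>"
proof -
  have c: "\<zero> \<odot>\<^bsub>M\<^esub> x \<in> carrier M"
    using assms lsmult_closed by simp
  have "\<zero> \<odot>\<^bsub>M\<^esub> x \<oplus>\<^bsub>M\<^esub> \<zero> \<odot>\<^bsub>M\<^esub> x = \<zero> \<odot>\<^bsub>M\<^esub> x \<oplus>\<^bsub>M\<^esub> \<zero>\<^bsub>M\<^esub>"
    using lsmult_l_distr[of "\<zero>" "\<zero>" x] assms c by simp
  then show ?thesis
    using c by (metis M.add.Units_l_cancel M.add.Units_eq M.zero_closed)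
qed

lemma lsmult_l_minus:
  assumes "a \<in> carrier R" "x \<in> carrier M"
  shows "(\<ominus> a) \<odot>\<^bsub>M\<^esub> x = \<ominus>\<^bsub>M\<^esub> (a \<odot>\<^bsub>M\<^esub> x)"
proof -
  have "a \<odot>\<^bsub>M\<^esub> x \<oplus>\<^bsub>M\<^esub> (\<ominus> a) \<odot>\<^bsub>M\<^esub> x = \<zero>\<^bsub>M\<^esub>"
    using lsmult_l_distr[of a "\<ominus> a" x] assms by (simp add: R.r_neg)
  then show ?thesis
    using assms lsmult_closed
    by (metis M.add.inv_closed M.add.inv_equality M.add.m_comm M.r_neg R.add.inv_closed)
qed

lemma lsmult_l_diff:
  assumes "a \<in> carrier R" "b \<in> carrier R" "x \<in> carrier M"
  shows "(a \<ominus> b) \<odot>\<^bsub>M\<^esub> x = a \<odot>\<^bsub>M\<^esub> x \<ominus>\<^bsub>M\<^esub> b \<odot>\<^bsub>M\<^esub> x"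
  using assms by (simp add: a_minus_def lsmult_l_distr lsmult_l_minus)

lemma lsmult_finsum:
  assumes "finite S" "a \<in> carrier R" "f \<in> S \<rightarrow> carrier M"
  shows "a \<odot>\<^bsub>M\<^esub> finsum M f S = finsum M (\<lambda>i. a \<odot>\<^bsub>M\<^esub> f i) S"
  using assms
  by (induct S rule: finite_induct) (simp_all add: Pi_def lsmult_r_distr lsmult_closed)

lemma finsum_lsmult:
  assumes "finite S" "x \<in> carrier M" "f \<in> S \<rightarrow> carrier R"
  shows "finsum R f S \<odot>\<^bsub>M\<^esub> x = finsum M (\<lambda>i. f i \<odot>\<^bsub>M\<^esub> x) S"
  using assms
  by (induct S rule: finite_induct) (simp_all add: Pi_def lsmult_l_distr lsmult_closed)

lemma cyclic_submodule:
  assumes u: "u \<in> carrier M"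
  shows "submodule {P \<odot>\<^bsub>M\<^esub> u | P. P \<in> carrier R} R M"
proof -
  let ?N = "{P \<odot>\<^bsub>M\<^esub> u | P. P \<in> carrier R}"
  have "subgroup ?N (add_monoid M)"
  proof
    show "?N \<subseteq> carrier (add_monoid M)"
      using u lsmult_closed by auto
  next
    fix x y
    assume "x \<in> ?N" "y \<in> ?N"
    then obtain P Q where "P \<in> carrier R" "Q \<in> carrier R" "x = P \<odot>\<^bsub>M\<^esub> u" "y = Q \<odot>\<^bsub>M\<^esub> u"
      by blast
    then show "x \<otimes>\<^bsub>add_monoid M\<^esub> y \<in> ?N"
      using u by (auto simp: lsmult_l_distr[symmetric] intro!: exI[of _ "P \<oplus> Q"])
  next
    show "\<one>\<^bsub>add_monoid M\<^esub> \<in> ?N"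
      using lsmult_l_null[OF u] by (auto intro!: exI[of _ \<zero>])
  next
    fix x
    assume "x \<in> ?N"
    then obtain P where P: "P \<in> carrier R" "x = P \<odot>\<^bsub>M\<^esub> u"
      by blast
    then have "inv\<^bsub>add_monoid M\<^esub> x = (\<ominus> P) \<odot>\<^bsub>M\<^esub> u"
      using u lsmult_l_minus by (simp add: a_inv_def)
    then show "inv\<^bsub>add_monoid M\<^esub> x \<in> ?N"
      using P(1) by blast
  qed
  moreover have "a \<odot>\<^bsub>M\<^esub> x \<in> ?N" if a: "a \<in> carrier R" and x: "x \<in> ?N" for a x
  proof -
    obtain P where "P \<in> carrier R" "x = P \<odot>\<^bsub>M\<^esub> u"
      using x by blast
    then show ?thesis
      using a u by (auto simp: lsmult_assoc1[symmetric] intro!: exI[of _ "a \<otimes> P"])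
  qed
  ultimately show ?thesis
    by (simp add: submodule_def submodule_axioms_def)
qed

end

definition simple_module :: "('a, 'c) ring_scheme \<Rightarrow> ('a, 'b) module \<Rightarrow> bool" where
  "simple_module R M \<longleftrightarrow> carrier M \<noteq> {\<zero>\<^bsub>M\<^esub>} \<and>
     (\<forall>N. submodule N R M \<longrightarrow> N = {\<zero>\<^bsub>M\<^esub>} \<or> N = carrier M)"

definition left_ideal_span :: "('a, 'b) ring_scheme \<Rightarrow> ('i::finite \<Rightarrow> 'a) \<Rightarrow> 'a set" where
  "left_ideal_span R E = {finsum R (\<lambda>i. P i \<otimes>\<^bsub>R\<^esub> E i) UNIV | P. \<forall>i. P i \<in> carrier R}"

context ring
begin

lemma left_ideal_span_subset:
  "(\<And>i. E i \<in> carrier R) \<Longrightarrow> left_ideal_span R E \<subseteq> carrier R"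
  by (auto simp: left_ideal_span_def intro!: finsum_closed)

lemma left_ideal_span_lmult:
  assumes E: "\<And>i. E i \<in> carrier R" and a: "a \<in> carrier R" and P: "P \<in> left_ideal_span R E"
  shows "a \<otimes> P \<in> left_ideal_span R E"
proof -
  obtain p where p: "\<forall>i. p i \<in> carrier R" "P = finsum R (\<lambda>i. p i \<otimes> E i) UNIV"
    using P by (auto simp: left_ideal_span_def)
  have "a \<otimes> P = finsum R (\<lambda>i. a \<otimes> (p i \<otimes> E i)) UNIV"
    unfolding p(2) using p(1) E a by (intro finsum_rdistr) auto
  also have "\<dots> = finsum R (\<lambda>i. (a \<otimes> p i) \<otimes> E i) UNIV"
    using p(1) E a by (intro finsum_cong') (auto simp: m_assoc)
  finally show ?thesis
    using p(1) a by (auto simp: left_ideal_span_def)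
qed

lemma left_ideal_span_add:
  assumes E: "\<And>i. E i \<in> carrier R" and P: "P \<in> left_ideal_span R E" and Q: "Q \<in> left_ideal_span R E"
  shows "P \<oplus> Q \<in> left_ideal_span R E"
proof -
  obtain p where p: "\<forall>i. p i \<in> carrier R" "P = finsum R (\<lambda>i. p i \<otimes> E i) UNIV"
    using P by (auto simp: left_ideal_span_def)
  obtain q where q: "\<forall>i. q i \<in> carrier R" "Q = finsum R (\<lambda>i. q i \<otimes> E i) UNIV"
    using Q by (auto simp: left_ideal_span_def)
  have "P \<oplus> Q = finsum R (\<lambda>i. p i \<otimes> E i \<oplus> q i \<otimes> E i) UNIV"
    unfolding p(2) q(2) using p(1) q(1) E by (intro finsum_addf[symmetric]) auto
  also have "\<dots> = finsum R (\<lambda>i. (p i \<oplus> q i) \<otimes> E i) UNIV"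
    using p(1) q(1) E by (intro finsum_cong') (auto simp: l_distr)
  finally show ?thesis
    using p(1) q(1) by (auto simp: left_ideal_span_def)
qed

lemma abelian_subgroup_left_ideal_span:
  assumes E: "\<And>i. E i \<in> carrier R"
  shows "abelian_subgroup (left_ideal_span R E) R"
proof -
  have "finsum R (\<lambda>i. \<zero> \<otimes> E i) UNIV \<in> left_ideal_span R E"
    by (auto simp: left_ideal_span_def)
  moreover have "finsum R (\<lambda>i. \<zero> \<otimes> E i) UNIV = \<zero>"
    using E by simp
  ultimately have zero: "\<zero> \<in> left_ideal_span R E"
    by simp
  have "\<ominus> P \<in> left_ideal_span R E" if P: "P \<in> left_ideal_span R E" for P
  proof -
    have "P \<in> carrier R"
      using P left_ideal_span_subset[of E, OF E] by blast
    then have "\<ominus> P = (\<ominus> \<one>) \<otimes> P"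
      by (simp add: l_minus)
    then show ?thesis
      using left_ideal_span_lmult[of E, OF E _ P] by simp
  qed
  then have "subgroup (left_ideal_span R E) (add_monoid R)"
    using left_ideal_span_subset[of E, OF E] left_ideal_span_add[of E, OF E] zero
    by (auto simp: a_inv_def intro!: subgroup.intro)
  then show ?thesis
    by (intro abelian_subgroupI3 is_abelian_group) (simp add: additive_subgroup_def)
qed

end

lemma (in left_module) lsmult_left_ideal_span:
  assumes E: "\<And>i. E i \<in> carrier R" and annihilates: "\<And>i. E i \<odot>\<^bsub>M\<^esub> v = \<zero>\<^bsub>M\<^esub>"
    and v: "v \<in> carrier M" and P: "P \<in> left_ideal_span R E"
  shows "P \<odot>\<^bsub>M\<^esub> v = \<zero>\<^bsub>M\<^esub>"
proof -
  obtain p where p: "\<And>i. p i \<in> carrier R" "P = finsum R (\<lambda>i. p i \<otimes> E i) UNIV"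
    using P by (auto simp: left_ideal_span_def)
  have "P \<odot>\<^bsub>M\<^esub> v = finsum M (\<lambda>i. (p i \<otimes> E i) \<odot>\<^bsub>M\<^esub> v) UNIV"
    unfolding p(2) using p(1) E v by (intro finsum_lsmult) auto
  also have "\<dots> = \<zero>\<^bsub>M\<^esub>"
    using p(1) E v annihilates by (simp add: lsmult_assoc1)
  finally show ?thesis .
qed

lemma (in group_hom) image_kernel_rcoset:
  assumes "x \<in> carrier G"
  shows "h ` (kernel G H h #> x) = {h x}"
proof
  show "h ` (kernel G H h #> x) \<subseteq> {h x}"
    using assms by (auto simp: kernel_def r_coset_def)
  have "x \<in> kernel G H h #> x"
    using assms subgroup_kernel by (rule G.rcos_self)
  then show "{h x} \<subseteq> h ` (kernel G H h #> x)"
    by blast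
qed

lemma quot_module_kernel_iso:
  fixes V :: "('a, 'v) module" and M :: "('a, 'b) module"
  assumes hom: "group_hom (add_monoid V) (add_monoid M) \<phi>"
    and onto: "\<phi> ` carrier V = carrier M"
    and smult: "\<And>r X. r \<in> carrier R \<Longrightarrow> X \<in> carrier V \<Longrightarrow>
      r \<odot>\<^bsub>V\<^esub> X \<in> carrier V \<and> \<phi> (r \<odot>\<^bsub>V\<^esub> X) = r \<odot>\<^bsub>M\<^esub> \<phi> X"
  shows "module_iso R (quot_module V (kernel (add_monoid V) (add_monoid M) \<phi>)) M (\<lambda>Y. the_elem (\<phi> ` Y))"
proof -
  interpret group_hom "add_monoid V" "add_monoid M" \<phi>
    by (rule hom)
  let ?K = "kernel (add_monoid V) (add_monoid M) \<phi>"
  let ?Q = "add_monoid V Mod ?K"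
  have carrier: "carrier (quot_module V ?K) = carrier ?Q"
    by (simp add: quot_module_def FactGroup_def A_RCOSETS_def)
  have cosets: "\<exists>X\<in>carrier V. Y = ?K #>\<^bsub>add_monoid V\<^esub> X" if "Y \<in> carrier ?Q" for Y
    using that by (auto simp: FactGroup_def RCOSETS_def)
  have "bij_betw (\<lambda>Y. the_elem (\<phi> ` Y)) (carrier ?Q) (carrier M)"
    using FactGroup_inj_on FactGroup_onto onto by (simp add: bij_betw_def)
  moreover have "the_elem (\<phi> ` (Y1 \<oplus>\<^bsub>quot_module V ?K\<^esub> Y2)) = the_elem (\<phi> ` Y1) \<oplus>\<^bsub>M\<^esub> the_elem (\<phi> ` Y2)"
    if "Y1 \<in> carrier ?Q" "Y2 \<in> carrier ?Q" for Y1 Y2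
    using Group.hom_mult[OF FactGroup_hom that] by (simp add: quot_module_def set_add_def FactGroup_def)
  moreover have "the_elem (\<phi> ` (r \<odot>\<^bsub>quot_module V ?K\<^esub> Y)) = r \<odot>\<^bsub>M\<^esub> the_elem (\<phi> ` Y)"
    if r: "r \<in> carrier R" and Y: "Y \<in> carrier ?Q" for r Y
  proof -
    obtain X where X: "X \<in> carrier V" "Y = ?K #>\<^bsub>add_monoid V\<^esub> X"
      using cosets[OF Y] by blast
    have image: "\<phi> ` Y = {\<phi> X}"
      using image_kernel_rcoset X by simp
    have "X \<in> Y"
      using X subgroup_kernel by (simp add: G.rcos_self)
    then have "(SOME Z. Z \<in> Y) \<in> Y"
      by (rule someI)
    moreover have "Y \<subseteq> carrier V"
      using X G.r_coset_subset_G[of ?K X] subgroup.subset[OF subgroup_kernel] by simp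
    ultimately have "(SOME Z. Z \<in> Y) \<in> carrier V" "\<phi> (SOME Z. Z \<in> Y) = \<phi> X"
      using image by blast+
    then show ?thesis
      using smult[OF r] image image_kernel_rcoset
      by (simp add: quot_module_def a_r_coset_def)
  qed
  ultimately show ?thesis
    unfolding module_iso_def carrier by blast
qed

lemma (in group_hom) subgroup_eq_carrier_of_kernel_subset:
  assumes N: "subgroup N G" and KN: "kernel G H h \<subseteq> N" and image: "h ` N = h ` carrier G"
  shows "N = carrier G"
proof
  show "N \<subseteq> carrier G"
    using N by (rule subgroup.subset)
next
  show "carrier G \<subseteq> N"
  proof
    fix y
    assume y: "y \<in> carrier G"
    then have "h y \<in> h ` N"
      using image by simp
    then obtain x where x: "x \<in> N" "h x = h y"
      by (metis imageE)
    then have xc: "x \<in> carrier G"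
      using N subgroup.subset by blast
    have "h (y \<otimes> inv x) = h y \<otimes>\<^bsub>H\<^esub> inv\<^bsub>H\<^esub> h y"
      using xc y x(2) by simp
    then have "y \<otimes> inv x \<in> kernel G H h"
      using xc y by (simp add: kernel_def)
    then have "(y \<otimes> inv x) \<otimes> x \<in> N"
      using KN x(1) subgroup.m_closed[OF N] by blast
    then show "y \<in> N"
      using xc y by (simp add: G.m_assoc)
  qed
qed

lemma image_submodule:
  fixes V :: "('a, 'v) module" and M :: "('a, 'b) module"
  assumes hom: "group_hom (add_monoid V) (add_monoid M) \<phi>"
    and smult: "\<And>r X. r \<in> carrier R \<Longrightarrow> X \<in> carrier V \<Longrightarrow> \<phi> (r \<odot>\<^bsub>V\<^esub> X) = r \<odot>\<^bsub>M\<^esub> \<phi> X"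
    and N: "submodule N R V"
  shows "submodule (\<phi> ` N) R M"
proof -
  have N_sub: "subgroup N (add_monoid V)"
    using N by (simp add: submodule_def)
  have "r \<odot>\<^bsub>M\<^esub> \<phi> X \<in> \<phi> ` N" if r: "r \<in> carrier R" and X: "X \<in> N" for r X
  proof -
    have "X \<in> carrier V"
      using X subgroup.subset[OF N_sub] by auto
    then have "r \<odot>\<^bsub>M\<^esub> \<phi> X = \<phi> (r \<odot>\<^bsub>V\<^esub> X)"
      using smult[OF r] by simp
    then show ?thesis
      using submodule.smult_closed[OF N r X] by (metis imageI)
  qed
  then show ?thesis
    using group_hom.subgroup_img_is_subgroup[OF hom N_sub]
    by (auto simp: submodule_def submodule_axioms_def)
qed

lemma kernel_maximal_submodule:
  fixes V :: "('a, 'v) module" and M :: "('a, 'b) module"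
  assumes hom: "group_hom (add_monoid V) (add_monoid M) \<phi>"
    and onto: "\<phi> ` carrier V = carrier M"
    and smult: "\<And>r X. r \<in> carrier R \<Longrightarrow> X \<in> carrier V \<Longrightarrow>
      r \<odot>\<^bsub>V\<^esub> X \<in> carrier V \<and> \<phi> (r \<odot>\<^bsub>V\<^esub> X) = r \<odot>\<^bsub>M\<^esub> \<phi> X"
    and M: "left_module R M" and simple: "simple_module R M"
  shows "maximal_submodule R V (kernel (add_monoid V) (add_monoid M) \<phi>)"
proof -
  interpret group_hom "add_monoid V" "add_monoid M" \<phi>
    by (rule hom)
  let ?K = "kernel (add_monoid V) (add_monoid M) \<phi>"
  have "r \<odot>\<^bsub>V\<^esub> X \<in> ?K" if "r \<in> carrier R" "X \<in> ?K" for r X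
    using that smult left_module.lsmult_r_null[OF M] by (auto simp: kernel_def)
  then have K: "submodule ?K R V"
    using subgroup_kernel by (simp add: submodule_def submodule_axioms_def)
  obtain y where "y \<in> carrier M" "y \<noteq> \<zero>\<^bsub>M\<^esub>"
    using simple H.one_closed by (auto simp: simple_module_def)
  then obtain X where "X \<in> carrier V" "\<phi> X \<noteq> \<zero>\<^bsub>M\<^esub>"
    using onto by (metis imageE)
  then have "?K \<noteq> carrier V"
    by (auto simp: kernel_def)
  moreover have "N = ?K \<or> N = carrier V" if N: "submodule N R V" and KN: "?K \<subseteq> N" for N
  proof -
    have "\<phi> ` N = {\<zero>\<^bsub>M\<^esub>} \<or> \<phi> ` N = carrier M"
      using simple image_submodule[OF hom _ N] smult by (simp add: simple_module_def)
    moreover have "N \<subseteq> carrier V"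
      using subgroup.subset[of N "add_monoid V"] N by (simp add: submodule_def)
    moreover have "N = carrier V" if "\<phi> ` N = \<phi> ` carrier V"
      using subgroup_eq_carrier_of_kernel_subset[of N] N KN that by (simp add: submodule_def)
    moreover have "N \<subseteq> ?K" if "\<phi> ` N = {\<zero>\<^bsub>M\<^esub>}" "N \<subseteq> carrier V"
      using that by (auto simp: kernel_def)
    ultimately show ?thesis
      using KN onto by blast
  qed
  ultimately show ?thesis
    using K by (simp add: maximal_submodule_def)
qed

lemma comm_group_cong:
  assumes "comm_group G" "carrier H = carrier G" "monoid.mult H = monoid.mult G" "one H = one G"
  shows "comm_group H"
proof -
  have "comm_group H = comm_group G"
    unfolding comm_group_def group_def group_axioms_def monoid_def comm_monoid_def
      comm_monoid_axioms_def Units_def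
    by (simp only: assms(2-4))
  then show ?thesis
    using assms(1) by simp
qed

section \<open>Linear algebra\<close>

lemma uncountable_infinite_fibre:
  fixes f :: "'c \<Rightarrow> 'd"
  assumes "uncountable (UNIV :: 'c set)" "countable S" "range f \<subseteq> S"
  shows "\<exists>y. infinite {c. f c = y}"
proof (rule ccontr)
  assume "\<nexists>y. infinite {c. f c = y}"
  then have "countable (\<Union>y\<in>S. {c. f c = y})"
    using assms(2) by (auto intro: countable_UN countable_finite)
  moreover have "(\<Union>y\<in>S. {c. f c = y}) = UNIV"
    using assms(3) by auto
  ultimately show False
    using assms(1) by simp
qed

context vector_space
begin

lemma in_span_finite_subset:
  assumes "x \<in> span B"
  obtains K where "finite K" "K \<subseteq> B" "x \<in> span K"
proof -
  obtain t r where t: "finite t" "t \<subseteq> B" and x: "x = (\<Sum>a\<in>t. scale (r a) a)"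
    using assms unfolding span_explicit by blast
  have "x \<in> span t"
    unfolding x by (rule span_sum, rule span_scale, rule span_base)
  with t that show ?thesis
    by blast
qed

lemma card_gt_span_relation:
  assumes "finite K" "finite C" "card K < card C" "f ` C \<subseteq> span K"
  shows "\<exists>\<mu> c0. c0 \<in> C \<and> \<mu> c0 \<noteq> 0 \<and> (\<Sum>c\<in>C. scale (\<mu> c) (f c)) = 0"
proof (cases "inj_on f C")
  case True
  have "\<not> independent (f ` C)"
    using independent_span_bound[OF assms(1) _ assms(4)] card_image[OF True] assms(3) by auto
  then obtain u where u: "\<exists>x\<in>f ` C. u x \<noteq> 0" "(\<Sum>x\<in>f ` C. scale (u x) x) = 0"
    using dependent_finite[of "f ` C"] assms(2) by blast
  then obtain c0 where "c0 \<in> C" "u (f c0) \<noteq> 0"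
    by blast
  moreover have "(\<Sum>c\<in>C. scale (u (f c)) (f c)) = 0"
    using u(2) sum.reindex[OF True, of "\<lambda>x. scale (u x) x"] by simp
  ultimately show ?thesis
    by (intro exI[of _ "\<lambda>c. u (f c)"] exI[of _ c0]) auto
next
  case False
  then obtain c c' where cc: "c \<in> C" "c' \<in> C" "c \<noteq> c'" "f c = f c'"
    unfolding inj_on_def by blast
  let ?\<mu> = "\<lambda>x. if x = c then 1 else if x = c' then -1 else 0"
  have "(\<Sum>x\<in>C. scale (?\<mu> x) (f x)) = (\<Sum>x\<in>{c, c'}. scale (?\<mu> x) (f x))"
    using assms(2) cc(1,2) by (intro sum.mono_neutral_right) auto
  also have "\<dots> = 0"
    using cc by simp
  finally show ?thesis
    using cc(1) by (intro exI[of _ ?\<mu>] exI[of _ c]) auto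
qed

lemma uncountable_family_relation:
  fixes f :: "'c \<Rightarrow> 'b"
  assumes "uncountable (UNIV :: 'c set)" "countable B" "range f \<subseteq> span B"
  shows "\<exists>C \<mu> c0. finite C \<and> c0 \<in> C \<and> \<mu> c0 \<noteq> 0 \<and> (\<Sum>c\<in>C. scale (\<mu> c) (f c)) = 0"
proof -
  have "\<exists>K. finite K \<and> K \<subseteq> B \<and> f c \<in> span K" for c
    using assms(3) by (meson in_span_finite_subset rangeI subsetD)
  then obtain K where K: "\<And>c. finite (K c) \<and> K c \<subseteq> B \<and> f c \<in> span (K c)"
    by metis
  have "range K \<subseteq> {K. finite K \<and> K \<subseteq> B}"
    using K by auto
  then obtain K0 where K0: "infinite {c. K c = K0}"
    using uncountable_infinite_fibre[OF assms(1) countable_Collect_finite_subset[OF assms(2)]]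
    by blast
  obtain C where C: "finite C" "card C = Suc (card K0)" "C \<subseteq> {c. K c = K0}"
    using infinite_arbitrarily_large[OF K0] by blast
  then obtain c1 where "c1 \<in> C"
    by (metis card.empty ex_in_conv nat.distinct(1))
  then have "finite K0"
    using C(3) K[of c1] by auto
  moreover have "f ` C \<subseteq> span K0"
    using K C(3) by auto
  ultimately show ?thesis
    using card_gt_span_relation[of K0 C f] C(1,2) by auto
qed

end

lemma Lagrange_combination_nonzero:
  fixes \<mu> :: "'a \<Rightarrow> 'a::idom"
  assumes "finite C" "c0 \<in> C" "\<mu> c0 \<noteq> 0"
  shows "(\<Sum>c\<in>C. smult (\<mu> c) (\<Prod>k\<in>C - {c}. [:-k, 1:])) \<noteq> 0"
proof -
  have "poly (\<Prod>k\<in>C - {c}. [:-k, 1:]) c0 = 0" if "c \<in> C - {c0}" for c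
    using that assms(1,2) by (auto simp: poly_prod intro!: prod_zero)
  then have "poly (\<Sum>c\<in>C. smult (\<mu> c) (\<Prod>k\<in>C - {c}. [:-k, 1:])) c0
      = \<mu> c0 * poly (\<Prod>k\<in>C - {c0}. [:-k, 1:]) c0"
    using assms(1,2) by (simp add: poly_sum sum.remove)
  also have "\<dots> \<noteq> 0"
    using assms(1,3) by (simp add: poly_prod)
  finally show ?thesis
    by auto
qed

section \<open>Operators on the Laurent polynomial ring\<close>

lemma polyfun_poly_coordinate: "polyfun (\<lambda>m. poly p (of_int (m j)))"
proof -
  define e :: "nat \<Rightarrow> 'a \<Rightarrow> nat" where "e i = (\<lambda>l. if l = j then i else 0)" for i
  have inj: "inj_on e {..degree p}"
    by (rule inj_onI) (metis e_def)
  have "poly p (of_int (m j)) = (\<Sum>k\<in>e ` {..degree p}. coeff p (k j) * (\<Prod>l\<in>UNIV. of_int (m l) ^ k l))"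
    for m :: "'a \<Rightarrow> int"
  proof -
    have "(\<Prod>l\<in>UNIV. (of_int (m l) :: complex) ^ e i l)
        = (\<Prod>l\<in>UNIV. if l = j then of_int (m j) ^ i else 1)" for i
      by (intro prod.cong) (auto simp: e_def)
    then have "(\<Prod>l\<in>UNIV. (of_int (m l) :: complex) ^ e i l) = of_int (m j) ^ i" for i
      by (simp add: prod.delta)
    moreover have "e i j = i" for i
      by (simp add: e_def)
    ultimately have "(\<Sum>k\<in>e ` {..degree p}. coeff p (k j) * (\<Prod>l\<in>UNIV. of_int (m l) ^ k l))
        = (\<Sum>i\<le>degree p. coeff p i * of_int (m j) ^ i)"
      by (simp only: sum.reindex[OF inj] comp_def)
    then show ?thesis
      by (simp add: poly_altdef)
  qed
  then show ?thesis
    unfolding polyfun_def by (intro exI[of _ "e ` {..degree p}"] exI[of _ "\<lambda>k. coeff p (k j)"]) simp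
qed

lemma vadd_zero [simp]: "vadd m (\<lambda>_. 0) = m"
  by (simp add: vadd_def)

lemma vsub_zero [simp]: "vsub e (\<lambda>_. 0) = e"
  by (simp add: vsub_def)

lemma vsub_self [simp]: "vsub a a = (\<lambda>_. 0)"
  by (simp add: vsub_def)

lemma vsub_eq_zero_iff [simp]: "vsub e b = (\<lambda>_. 0) \<longleftrightarrow> e = b"
  by (auto simp: vsub_def fun_eq_iff)

lemma vadd_vsub [simp]: "vadd b (vsub a b) = a"
  by (simp add: vadd_def vsub_def)

lemma vsub_vadd [simp]: "vsub (vadd b a) b = a"
  by (simp add: vadd_def vsub_def)

lemma DR_carrier: "carrier (DR A) = {P. weyl_op P \<and> preserves A P}"
  by (simp add: DR_def)

lemma DR_mult: "monoid.mult (DR A) = kmult"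
  by (simp add: DR_def)

lemma DR_one: "\<one>\<^bsub>DR A\<^esub> = (\<lambda>b m. if b = (\<lambda>_. 0) then 1 else 0)"
  by (simp add: DR_def)

lemma DR_zero: "\<zero>\<^bsub>DR A\<^esub> = (\<lambda>b m. 0)"
  by (simp add: DR_def)

lemma DR_add: "P \<oplus>\<^bsub>DR A\<^esub> Q = (\<lambda>b m. P b m + Q b m)"
  by (simp add: DR_def)

lemma not_in_ksupp: "b \<notin> ksupp P \<Longrightarrow> P b m = 0"
  by (simp add: ksupp_def)

lemma finite_ksupp_DR: "P \<in> carrier (DR A) \<Longrightarrow> finite (ksupp P)"
  by (simp add: DR_carrier weyl_op_def)

lemma mult_single_ksupp:
  assumes "ksupp Q \<subseteq> {b}"
  shows "(P \<otimes>\<^bsub>DR A\<^esub> Q) e m = Q b m * P (vsub e b) (vadd m b)"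
proof (cases "b \<in> ksupp Q")
  case True
  then have "ksupp Q = {b}"
    using assms by auto
  then show ?thesis
    by (simp add: DR_mult kmult_def)
next
  case False
  then have "ksupp Q = {}"
    using assms by auto
  then show ?thesis
    using False by (simp add: DR_mult kmult_def not_in_ksupp)
qed

lemma single_ksupp_eq_zero: "ksupp P \<subseteq> {b} \<Longrightarrow> e \<noteq> b \<Longrightarrow> P e m = 0"
  by (metis not_in_ksupp singletonD subsetD)

(* Operators of degree zero, i.e. the polynomials in s_1, ..., s_d. *)
definition diagonal :: "'n kern \<Rightarrow> bool" where
  "diagonal P \<longleftrightarrow> ksupp P \<subseteq> {\<lambda>_. 0}"

lemma diagonalI: "(\<And>e m. e \<noteq> (\<lambda>_. 0) \<Longrightarrow> P e m = 0) \<Longrightarrow> diagonal P"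
  unfolding diagonal_def ksupp_def by auto

lemma diagonal_eq_zero: "diagonal P \<Longrightarrow> e \<noteq> (\<lambda>_. 0) \<Longrightarrow> P e m = 0"
  unfolding diagonal_def using single_ksupp_eq_zero[of P "\<lambda>_. 0" e m] by blast

lemma mult_diagonal: "diagonal Q \<Longrightarrow> (P \<otimes>\<^bsub>DR A\<^esub> Q) e m = Q (\<lambda>_. 0) m * P e m"
  unfolding diagonal_def by (simp add: mult_single_ksupp)

lemma diagonal_in_DR:
  assumes "diagonal P" "polyfun (P (\<lambda>_. 0))"
  shows "P \<in> carrier (DR A)"
proof -
  have "finite (ksupp P)"
    using assms(1) unfolding diagonal_def by (rule finite_subset) simp
  moreover have "polyfun (P b)" for b
  proof (cases "b = (\<lambda>_. 0)")
    case False
    then have "P b = (\<lambda>m. 0)"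
      using diagonal_eq_zero[OF assms(1)] by auto
    then show ?thesis
      using polyfun_poly_coordinate[of 0] by simp
  qed (use assms(2) in simp)
  moreover have "preserves A P"
    unfolding preserves_def using diagonal_eq_zero[OF assms(1)] by (metis vadd_zero)
  ultimately show ?thesis
    by (simp add: DR_carrier weyl_op_def)
qed

definition euler_poly :: "'n \<Rightarrow> complex poly \<Rightarrow> 'n kern" where
  "euler_poly j p = (\<lambda>b m. if b = (\<lambda>_. 0) then poly p (of_int (m j)) else 0)"

lemma diagonal_euler_poly: "diagonal (euler_poly j p)"
  by (rule diagonalI) (simp add: euler_poly_def)

lemma euler_poly_in_DR [simp]: "euler_poly j p \<in> carrier (DR A)"
  by (rule diagonal_in_DR[OF diagonal_euler_poly]) (simp add: euler_poly_def polyfun_poly_coordinate)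

lemma kscal_eq_euler_poly: "kscal c = euler_poly j [:c:]"
  by (auto simp: kscal_def euler_poly_def)

lemma euler_eq_euler_poly: "euler j = euler_poly j [:0, 1:]"
  by (intro ext) (simp add: euler_def euler_poly_def)

lemma euler_eq_euler_poly_add_kscal: "euler j = euler_poly j [:-c, 1:] \<oplus>\<^bsub>DR A\<^esub> kscal c"
  by (intro ext) (simp add: euler_def euler_poly_def kscal_def DR_add)

lemma diagonal_kscal: "diagonal (kscal c)"
  by (simp add: kscal_eq_euler_poly[where j = undefined] diagonal_euler_poly)

lemma diagonal_euler: "diagonal (euler j)"
  by (simp add: euler_eq_euler_poly diagonal_euler_poly)

lemma kscal_in_DR [simp]: "kscal c \<in> carrier (DR A)"
  by (simp add: kscal_eq_euler_poly[where j = undefined])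

lemma euler_in_DR [simp]: "euler j \<in> carrier (DR A)"
  by (simp add: euler_eq_euler_poly)

definition kscale :: "complex \<Rightarrow> 'n kern \<Rightarrow> 'n kern" where
  "kscale a P = (\<lambda>b m. a * P b m)"

interpretation kern: vector_space "kscale :: complex \<Rightarrow> 'n kern \<Rightarrow> 'n kern"
  by unfold_locales (auto simp: kscale_def fun_eq_iff algebra_simps)

lemma kscal_mult_left:
  assumes "P \<in> carrier (DR A)"
  shows "kscal c \<otimes>\<^bsub>DR A\<^esub> P = kscale c P"
proof (intro ext)
  fix e m
  have "(kscal c \<otimes>\<^bsub>DR A\<^esub> P) e m = (\<Sum>b\<in>ksupp P. if b = e then P b m * c else 0)"
    unfolding DR_mult kmult_def kscal_def by (intro sum.cong) auto
  also have "\<dots> = c * P e m"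
    using finite_ksupp_DR[OF assms] by (auto simp: not_in_ksupp)
  finally show "(kscal c \<otimes>\<^bsub>DR A\<^esub> P) e m = kscale c P e m"
    by (simp add: kscale_def)
qed

lemma kscal_mult_right: "P \<otimes>\<^bsub>DR A\<^esub> kscal c = kscale c P"
  by (intro ext) (simp add: mult_diagonal[OF diagonal_kscal], simp add: kscal_def kscale_def)

lemma kscal_commute: "P \<in> carrier (DR A) \<Longrightarrow> P \<otimes>\<^bsub>DR A\<^esub> kscal c = kscal c \<otimes>\<^bsub>DR A\<^esub> P"
  by (simp add: kscal_mult_left kscal_mult_right)

lemma diagonal_mult_commute:
  assumes "diagonal P" "diagonal Q"
  shows "P \<otimes>\<^bsub>DR A\<^esub> Q = Q \<otimes>\<^bsub>DR A\<^esub> P"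
proof (intro ext)
  fix e m
  show "(P \<otimes>\<^bsub>DR A\<^esub> Q) e m = (Q \<otimes>\<^bsub>DR A\<^esub> P) e m"
    using assms by (cases "e = (\<lambda>_. 0)") (auto simp: mult_diagonal diagonal_eq_zero)
qed

definition hcomp :: "('n \<Rightarrow> int) \<Rightarrow> 'n kern \<Rightarrow> 'n kern" where
  "hcomp b P = (\<lambda>e m. if e = b then P e m else 0)"

lemma ksupp_hcomp: "ksupp (hcomp b P) \<subseteq> {b}"
  by (auto simp: ksupp_def hcomp_def)

lemma hcomp_in_DR:
  assumes "P \<in> carrier (DR A)"
  shows "hcomp b P \<in> carrier (DR A)"
proof -
  have "ksupp (hcomp b P) \<subseteq> ksupp P"
    by (auto simp: ksupp_def hcomp_def)
  moreover have "polyfun (hcomp b P e)" for e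
    using assms polyfun_poly_coordinate[of 0]
    by (cases "e = b") (auto simp: hcomp_def DR_carrier weyl_op_def)
  ultimately show ?thesis
    using assms by (auto simp: DR_carrier weyl_op_def preserves_def hcomp_def intro: finite_subset)
qed

lemma hcomp_eq_zero: "b \<notin> ksupp P \<Longrightarrow> hcomp b P = \<zero>\<^bsub>DR A\<^esub>"
  by (intro ext) (simp add: hcomp_def not_in_ksupp DR_zero)

lemma euler_mult_single_ksupp:
  assumes "ksupp P \<subseteq> {b}"
  shows "euler j \<otimes>\<^bsub>DR A\<^esub> P = P \<otimes>\<^bsub>DR A\<^esub> (euler j \<oplus>\<^bsub>DR A\<^esub> kscal (of_int (b j)))"
proof (intro ext)
  fix e m
  have d: "diagonal (euler j \<oplus>\<^bsub>DR A\<^esub> kscal (of_int (b j)))"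
    by (rule diagonalI) (simp add: euler_def kscal_def DR_add)
  have "(euler j \<otimes>\<^bsub>DR A\<^esub> P) e m = P b m * (if e = b then of_int (m j) + of_int (b j) else 0)"
    using assms by (simp add: mult_single_ksupp euler_def vadd_def)
  also have "\<dots> = (of_int (m j) + of_int (b j)) * P e m"
    using single_ksupp_eq_zero[OF assms] by auto
  also have "\<dots> = (P \<otimes>\<^bsub>DR A\<^esub> (euler j \<oplus>\<^bsub>DR A\<^esub> kscal (of_int (b j)))) e m"
    by (simp only: mult_diagonal[OF d]) (simp add: euler_def kscal_def DR_add)
  finally show "(euler j \<otimes>\<^bsub>DR A\<^esub> P) e m
      = (P \<otimes>\<^bsub>DR A\<^esub> (euler j \<oplus>\<^bsub>DR A\<^esub> kscal (of_int (b j)))) e m" .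
qed

(* That D(R_A) is a ring is not proved here; it is part of every left-module hypothesis. *)
locale DR_ring = ring "DR A" for A :: "('n::finite \<Rightarrow> int) set"
begin

lemma a_inv_DR:
  assumes "P \<in> carrier (DR A)"
  shows "\<ominus>\<^bsub>DR A\<^esub> P = (\<lambda>b m. - P b m)"
proof (intro ext)
  fix b m
  have "(P \<oplus>\<^bsub>DR A\<^esub> \<ominus>\<^bsub>DR A\<^esub> P) b m = 0"
    using r_neg[OF assms] by (simp add: DR_zero)
  then show "(\<ominus>\<^bsub>DR A\<^esub> P) b m = - P b m"
    by (simp add: add_eq_0_iff DR_add)
qed

lemma minus_DR:
  assumes "P \<in> carrier (DR A)" "Q \<in> carrier (DR A)"
  shows "P \<ominus>\<^bsub>DR A\<^esub> Q = (\<lambda>b m. P b m - Q b m)"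
  using assms by (simp add: a_minus_def a_inv_DR DR_add)

lemma finsum_DR:
  assumes "finite S" "f \<in> S \<rightarrow> carrier (DR A)"
  shows "finsum (DR A) f S = (\<lambda>b m. \<Sum>i\<in>S. f i b m)"
  using assms
proof (induct S rule: finite_induct)
  case (insert x F)
  then have "finsum (DR A) f (insert x F) = f x \<oplus>\<^bsub>DR A\<^esub> finsum (DR A) f F"
    by (intro finsum_insert) auto
  with insert show ?case
    by (simp add: DR_add)
qed (simp add: DR_zero)

lemma finsum_hcomp:
  assumes "P \<in> carrier (DR A)"
  shows "finsum (DR A) (\<lambda>b. hcomp b P) (ksupp P) = P"
proof -
  have fin: "finite (ksupp P)"
    using assms by (rule finite_ksupp_DR)
  have "finsum (DR A) (\<lambda>b. hcomp b P) (ksupp P) = (\<lambda>e m. \<Sum>b\<in>ksupp P. hcomp b P e m)"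
    using fin hcomp_in_DR[OF assms] by (intro finsum_DR) auto
  also have "\<dots> = P"
    using fin by (intro ext) (auto simp: hcomp_def not_in_ksupp)
  finally show ?thesis .
qed

lemma single_ksupp_in_Dgr:
  assumes P: "P \<in> carrier (DR A)" and supp: "ksupp P \<subseteq> {b}"
  shows "P \<in> Dgr A b"
  unfolding Dgr_def
proof (intro CollectI conjI allI P)
  fix j
  have "(euler j \<otimes>\<^bsub>DR A\<^esub> P \<ominus>\<^bsub>DR A\<^esub> P \<otimes>\<^bsub>DR A\<^esub> euler j) e m = of_int (b j) * P e m" for e m
  proof -
    have "(euler j \<otimes>\<^bsub>DR A\<^esub> P \<ominus>\<^bsub>DR A\<^esub> P \<otimes>\<^bsub>DR A\<^esub> euler j) e m
        = P b m * (if e = b then of_int (m j) + of_int (b j) else 0) - of_int (m j) * P e m"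
      using P by (simp add: minus_DR mult_single_ksupp[OF supp] mult_diagonal[OF diagonal_euler],
          simp add: euler_def vadd_def)
    also have "\<dots> = of_int (b j) * P e m"
      using single_ksupp_eq_zero[OF supp] by (auto simp: algebra_simps)
    finally show ?thesis .
  qed
  then show "euler j \<otimes>\<^bsub>DR A\<^esub> P \<ominus>\<^bsub>DR A\<^esub> P \<otimes>\<^bsub>DR A\<^esub> euler j = kscal (of_int (b j)) \<otimes>\<^bsub>DR A\<^esub> P"
    using P by (simp add: kscal_mult_left kscale_def fun_eq_iff)
qed

lemma kscal_add: "kscal (c + d) = kscal c \<oplus>\<^bsub>DR A\<^esub> kscal d"
  by (auto simp: kscal_def DR_add)

lemma kscal_mult: "kscal (c * d) = kscal c \<otimes>\<^bsub>DR A\<^esub> kscal d"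
  by (intro ext) (simp add: mult_diagonal[OF diagonal_kscal], simp add: kscal_def)

lemma kscal_one: "kscal 1 = \<one>\<^bsub>DR A\<^esub>"
  by (auto simp: kscal_def DR_one)

lemma kscal_zero: "kscal 0 = \<zero>\<^bsub>DR A\<^esub>"
  by (auto simp: kscal_def DR_zero)

lemma euler_poly_mult: "euler_poly j (p * q) = euler_poly j p \<otimes>\<^bsub>DR A\<^esub> euler_poly j q"
  by (intro ext) (simp add: mult_diagonal[OF diagonal_euler_poly], simp add: euler_poly_def)

lemma kscal_diff: "kscal (c - d) = kscal c \<ominus>\<^bsub>DR A\<^esub> kscal d"
  by (intro ext) (simp add: minus_DR, simp add: kscal_def)

end

lemma sum_apply: "(\<Sum>i\<in>S. f i) x = (\<Sum>i\<in>S. f i x)"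
  by (induct S rule: infinite_finite_induct) auto

lemma euler_poly_lincomb:
  "euler_poly j (\<Sum>c\<in>C. smult (\<mu> c) (p c)) = (\<Sum>c\<in>C. kscale (\<mu> c) (euler_poly j (p c)))"
  by (intro ext) (simp add: sum_apply euler_poly_def kscale_def poly_sum)

definition euler_monomial :: "('n::finite \<Rightarrow> nat) \<Rightarrow> 'n kern" where
  "euler_monomial k = (\<lambda>b m. if b = (\<lambda>_. 0) then (\<Prod>j\<in>UNIV. of_int (m j) ^ k j) else 0)"

lemma diagonal_in_span_euler_monomial:
  assumes "P \<in> carrier (DR A)" "diagonal P"
  shows "P \<in> kern.span (range euler_monomial)"
proof -
  obtain K c where K: "finite K" "\<And>m. P (\<lambda>_. 0) m = (\<Sum>k\<in>K. c k * (\<Prod>j\<in>UNIV. of_int (m j) ^ k j))"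
  proof -
    have "polyfun (P (\<lambda>_. 0))"
      using assms(1) by (simp add: DR_carrier weyl_op_def)
    then show ?thesis
      unfolding polyfun_def using that by blast
  qed
  have "P = (\<Sum>k\<in>K. kscale (c k) (euler_monomial k))"
  proof (intro ext)
    fix b m
    show "P b m = (\<Sum>k\<in>K. kscale (c k) (euler_monomial k)) b m"
      using K(2) diagonal_eq_zero[OF assms(2)]
      by (cases "b = (\<lambda>_. 0)") (auto simp: sum_apply kscale_def euler_monomial_def)
  qed
  also have "\<dots> \<in> kern.span (range euler_monomial)"
    by (intro kern.span_sum kern.span_scale kern.span_base) auto
  finally show ?thesis .
qed

section \<open>Graded simple modules\<close>

locale graded_simple_module =
  fixes A :: "('n::finite \<Rightarrow> int) set" and M :: "('n kern, 'm) module"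
    and gr :: "('n \<Rightarrow> int) \<Rightarrow> 'm set"
  assumes graded_simple: "graded_simple A M gr"
begin

lemma graded_module: "graded_module A M gr"
  using graded_simple by (simp add: graded_simple_def)

sublocale left_module "DR A" M
  using graded_module by (simp add: graded_module_def)

sublocale DR_ring A ..

lemma homogeneous_subgroup: "subgroup (gr a) (add_monoid M)"
  using graded_module by (simp add: graded_module_def)

lemma homogeneous_in_carrier: "x \<in> gr a \<Longrightarrow> x \<in> carrier M"
  using subgroup.subset[OF homogeneous_subgroup] by auto

lemma zero_homogeneous: "\<zero>\<^bsub>M\<^esub> \<in> gr a"
  using subgroup.one_closed[OF homogeneous_subgroup] by simp

lemma lsmult_Dgr_homogeneous: "P \<in> Dgr A b \<Longrightarrow> x \<in> gr a \<Longrightarrow> P \<odot>\<^bsub>M\<^esub> x \<in> gr (vadd a b)"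
  using graded_module by (simp add: graded_module_def)

lemma lsmult_diagonal_homogeneous:
  assumes "P \<in> carrier (DR A)" "diagonal P" "x \<in> gr a"
  shows "P \<odot>\<^bsub>M\<^esub> x \<in> gr a"
  using lsmult_Dgr_homogeneous[OF single_ksupp_in_Dgr assms(3)] assms(1,2)
  unfolding diagonal_def by fastforce

lemma homogeneous_decomposition:
  "x \<in> carrier M \<Longrightarrow> \<exists>c. (\<forall>a. c a \<in> gr a) \<and> finite {a. c a \<noteq> \<zero>\<^bsub>M\<^esub>} \<and>
     x = finsum M c {a. c a \<noteq> \<zero>\<^bsub>M\<^esub>}"
  using graded_module unfolding graded_module_def by blast

lemma finsum_homogeneous_support:
  assumes "finite S" "{a. c a \<noteq> \<zero>\<^bsub>M\<^esub>} \<subseteq> S" "\<forall>a. c a \<in> gr a"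
  shows "finsum M c S = finsum M c {a. c a \<noteq> \<zero>\<^bsub>M\<^esub>}"
  using assms homogeneous_in_carrier by (intro M.add.finprod_mono_neutral_cong_left[symmetric]) auto

lemma homogeneous_decomposition_unique:
  assumes c: "\<forall>a. c a \<in> gr a" "finite S" "{a. c a \<noteq> \<zero>\<^bsub>M\<^esub>} \<subseteq> S"
    and c': "\<forall>a. c' a \<in> gr a" "finite S'" "{a. c' a \<noteq> \<zero>\<^bsub>M\<^esub>} \<subseteq> S'"
    and eq: "finsum M c S = finsum M c' S'"
  shows "c = c'"
proof -
  have "finsum M c S \<in> carrier M"
    using c(1) homogeneous_in_carrier by (intro M.finsum_closed) auto
  then have "\<exists>!d. (\<forall>a. d a \<in> gr a) \<and> finite {a. d a \<noteq> \<zero>\<^bsub>M\<^esub>} \<and>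
      finsum M c S = finsum M d {a. d a \<noteq> \<zero>\<^bsub>M\<^esub>}"
    using graded_module unfolding graded_module_def by blast
  moreover have "finite {a. c a \<noteq> \<zero>\<^bsub>M\<^esub>}" "finite {a. c' a \<noteq> \<zero>\<^bsub>M\<^esub>}"
    using c c' finite_subset by blast+
  moreover have "finsum M c S = finsum M c {a. c a \<noteq> \<zero>\<^bsub>M\<^esub>}"
    using finsum_homogeneous_support[OF c(2,3,1)] .
  moreover have "finsum M c S = finsum M c' {a. c' a \<noteq> \<zero>\<^bsub>M\<^esub>}"
    using eq finsum_homogeneous_support[OF c'(2,3,1)] by simp
  ultimately show ?thesis
    using c(1) c'(1) by blast
qed

lemma lsmult_homogeneous_decomposition:
  assumes u: "u \<in> gr a" and P: "P \<in> carrier (DR A)"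
  defines "c \<equiv> \<lambda>a'. hcomp (vsub a' a) P \<odot>\<^bsub>M\<^esub> u"
  shows "\<forall>a'. c a' \<in> gr a'" "finite {a'. c a' \<noteq> \<zero>\<^bsub>M\<^esub>}"
    "P \<odot>\<^bsub>M\<^esub> u = finsum M c {a'. c a' \<noteq> \<zero>\<^bsub>M\<^esub>}"
proof -
  have uc: "u \<in> carrier M"
    using u by (rule homogeneous_in_carrier)
  show c: "\<forall>a'. c a' \<in> gr a'"
    unfolding c_def
    using lsmult_Dgr_homogeneous[OF single_ksupp_in_Dgr[OF hcomp_in_DR[OF P] ksupp_hcomp] u]
    by (metis vadd_vsub)
  have fin: "finite (ksupp P)"
    using P by (rule finite_ksupp_DR)
  have sub: "{a'. c a' \<noteq> \<zero>\<^bsub>M\<^esub>} \<subseteq> vadd a ` ksupp P"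
  proof
    fix a'
    assume "a' \<in> {a'. c a' \<noteq> \<zero>\<^bsub>M\<^esub>}"
    then have "vsub a' a \<in> ksupp P"
      unfolding c_def using hcomp_eq_zero lsmult_l_null[OF uc] by fastforce
    then show "a' \<in> vadd a ` ksupp P"
      by (metis image_eqI vadd_vsub)
  qed
  then show "finite {a'. c a' \<noteq> \<zero>\<^bsub>M\<^esub>}"
    using fin finite_subset by blast
  have inj: "inj_on (vadd a) (ksupp P)"
    by (metis inj_onI vsub_vadd)
  have "P \<odot>\<^bsub>M\<^esub> u = finsum (DR A) (\<lambda>b. hcomp b P) (ksupp P) \<odot>\<^bsub>M\<^esub> u"
    using finsum_hcomp[OF P] by simp
  also have "\<dots> = finsum M (\<lambda>b. hcomp b P \<odot>\<^bsub>M\<^esub> u) (ksupp P)"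
    using hcomp_in_DR[OF P] by (intro finsum_lsmult fin uc) blast
  also have "\<dots> = finsum M (\<lambda>b. c (vadd a b)) (ksupp P)"
    by (intro M.finsum_cong') (auto simp: c_def intro!: lsmult_closed hcomp_in_DR[OF P] uc)
  also have "\<dots> = finsum M c (vadd a ` ksupp P)"
    using c homogeneous_in_carrier by (intro M.finsum_reindex[symmetric] inj) auto
  also have "\<dots> = finsum M c {a'. c a' \<noteq> \<zero>\<^bsub>M\<^esub>}"
    using fin sub c by (intro finsum_homogeneous_support) auto
  finally show "P \<odot>\<^bsub>M\<^esub> u = finsum M c {a'. c a' \<noteq> \<zero>\<^bsub>M\<^esub>}" .
qed

lemma nonzero_homogeneous_generates:
  assumes u: "u \<in> gr a" "u \<noteq> \<zero>\<^bsub>M\<^esub>" and x: "x \<in> carrier M"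
  shows "\<exists>P \<in> carrier (DR A). x = P \<odot>\<^bsub>M\<^esub> u"
proof -
  let ?N = "{P \<odot>\<^bsub>M\<^esub> u | P. P \<in> carrier (DR A)}"
  have uc: "u \<in> carrier M"
    using u(1) by (rule homogeneous_in_carrier)
  have "graded_submodule A M gr ?N"
    unfolding graded_submodule_def
  proof (intro conjI ballI cyclic_submodule[OF uc])
    fix y
    assume "y \<in> ?N"
    then obtain P where P: "P \<in> carrier (DR A)" "y = P \<odot>\<^bsub>M\<^esub> u"
      by blast
    let ?c = "\<lambda>a'. hcomp (vsub a' a) P \<odot>\<^bsub>M\<^esub> u"
    have "\<forall>a'. ?c a' \<in> ?N"
      using hcomp_in_DR[OF P(1)] by blast
    then show "\<exists>c. (\<forall>a. c a \<in> gr a \<inter> ?N) \<and> finite {a. c a \<noteq> \<zero>\<^bsub>M\<^esub>} \<and>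
        y = finsum M c {a. c a \<noteq> \<zero>\<^bsub>M\<^esub>}"
      using lsmult_homogeneous_decomposition[OF u(1) P(1)] P(2) by (intro exI[of _ ?c]) blast
  qed
  then have "?N = {\<zero>\<^bsub>M\<^esub>} \<or> ?N = carrier M"
    using graded_simple by (simp add: graded_simple_def)
  moreover have "u \<in> ?N"
    using lsmult_one[OF uc] R.one_closed by force
  ultimately show ?thesis
    using u(2) x by blast
qed

lemma nonzero_homogeneous_generates_homogeneous:
  assumes u: "u \<in> gr a" "u \<noteq> \<zero>\<^bsub>M\<^esub>" and w: "w \<in> gr a'"
  shows "\<exists>P \<in> carrier (DR A). ksupp P \<subseteq> {vsub a' a} \<and> w = P \<odot>\<^bsub>M\<^esub> u"
proof -
  obtain P where P: "P \<in> carrier (DR A)" "w = P \<odot>\<^bsub>M\<^esub> u"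
    using nonzero_homogeneous_generates[OF u] w homogeneous_in_carrier by blast
  let ?c = "\<lambda>a''. hcomp (vsub a'' a) P \<odot>\<^bsub>M\<^esub> u"
  let ?w = "\<lambda>a''. if a'' = a' then w else \<zero>\<^bsub>M\<^esub>"
  have "finsum M ?w {a'} = w"
    using w homogeneous_in_carrier by (simp add: M.finsum_singleton)
  then have "?w = ?c"
    using lsmult_homogeneous_decomposition[OF u(1) P(1)] P(2) w zero_homogeneous
    by (intro homogeneous_decomposition_unique[of ?w "{a'}" ?c "{a'. ?c a' \<noteq> \<zero>\<^bsub>M\<^esub>}"]) auto
  then have "w = ?c a'"
    by (metis (mono_tags))
  then show ?thesis
    using hcomp_in_DR[OF P(1)] ksupp_hcomp by blast
qed

lemma nonzero_homogeneous_generates_diagonal: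
  assumes "u \<in> gr a" "u \<noteq> \<zero>\<^bsub>M\<^esub>" "w \<in> gr a"
  shows "\<exists>Q \<in> carrier (DR A). diagonal Q \<and> w = Q \<odot>\<^bsub>M\<^esub> u"
  using nonzero_homogeneous_generates_homogeneous[OF assms] by (auto simp: diagonal_def)

lemma exists_nonzero_homogeneous: "\<exists>a v. v \<in> gr a \<and> v \<noteq> \<zero>\<^bsub>M\<^esub>"
proof -
  obtain x where x: "x \<in> carrier M" "x \<noteq> \<zero>\<^bsub>M\<^esub>"
    using graded_simple M.zero_closed by (auto simp: graded_simple_def)
  then obtain c where c: "\<forall>a. c a \<in> gr a" "x = finsum M c {a. c a \<noteq> \<zero>\<^bsub>M\<^esub>}"
    using homogeneous_decomposition by blast
  then have "{a. c a \<noteq> \<zero>\<^bsub>M\<^esub>} \<noteq> {}"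
    using x(2) by force
  then show ?thesis
    using c(1) by blast
qed

lemma lsmult_diagonal_commute:
  assumes "P \<in> carrier (DR A)" "Q \<in> carrier (DR A)" "diagonal P" "diagonal Q" "x \<in> carrier M"
  shows "P \<odot>\<^bsub>M\<^esub> (Q \<odot>\<^bsub>M\<^esub> x) = Q \<odot>\<^bsub>M\<^esub> (P \<odot>\<^bsub>M\<^esub> x)"
  using assms by (simp add: lsmult_assoc1[symmetric] diagonal_mult_commute)

lemma kscal_lsmult_inverse:
  assumes "c \<noteq> 0" "x \<in> carrier M"
  shows "kscal (inverse c) \<odot>\<^bsub>M\<^esub> (kscal c \<odot>\<^bsub>M\<^esub> x) = x"
proof -
  have "kscal (inverse c) \<odot>\<^bsub>M\<^esub> (kscal c \<odot>\<^bsub>M\<^esub> x) = kscal (inverse c * c) \<odot>\<^bsub>M\<^esub> x"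
    using assms(2) by (simp add: lsmult_assoc1[symmetric] kscal_mult)
  also have "\<dots> = x"
    using assms by (simp add: kscal_one lsmult_one)
  finally show ?thesis .
qed

lemma kscal_lsmult_diff:
  "x \<in> carrier M \<Longrightarrow> kscal c \<odot>\<^bsub>M\<^esub> x \<ominus>\<^bsub>M\<^esub> kscal d \<odot>\<^bsub>M\<^esub> x = kscal (c - d) \<odot>\<^bsub>M\<^esub> x"
  by (simp add: kscal_diff lsmult_l_diff)

lemma lincomb_lsmult:
  assumes "finite C" "\<And>c. c \<in> C \<Longrightarrow> P c \<in> carrier (DR A)" "x \<in> carrier M"
  shows "(\<Sum>c\<in>C. kscale (\<mu> c) (P c)) \<odot>\<^bsub>M\<^esub> x = finsum M (\<lambda>c. kscal (\<mu> c) \<odot>\<^bsub>M\<^esub> (P c \<odot>\<^bsub>M\<^esub> x)) C"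
proof -
  have kscale_in_DR: "kscale (\<mu> c) (P c) \<in> carrier (DR A)" if "c \<in> C" for c
    using assms(2)[OF that] by (simp add: kscal_mult_left[where A = A, symmetric])
  then have "(\<Sum>c\<in>C. kscale (\<mu> c) (P c)) = finsum (DR A) (\<lambda>c. kscale (\<mu> c) (P c)) C"
    using assms(1) by (subst finsum_DR) (auto simp: sum_apply intro!: ext)
  then have "(\<Sum>c\<in>C. kscale (\<mu> c) (P c)) \<odot>\<^bsub>M\<^esub> x = finsum (DR A) (\<lambda>c. kscale (\<mu> c) (P c)) C \<odot>\<^bsub>M\<^esub> x"
    by simp
  also have "\<dots> = finsum M (\<lambda>c. kscale (\<mu> c) (P c) \<odot>\<^bsub>M\<^esub> x) C"
    using kscale_in_DR assms(1,3) by (intro finsum_lsmult) auto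
  also have "\<dots> = finsum M (\<lambda>c. kscal (\<mu> c) \<odot>\<^bsub>M\<^esub> (P c \<odot>\<^bsub>M\<^esub> x)) C"
  proof (intro M.finsum_cong' refl)
    fix c
    assume "c \<in> C"
    then show "kscale (\<mu> c) (P c) \<odot>\<^bsub>M\<^esub> x = kscal (\<mu> c) \<odot>\<^bsub>M\<^esub> (P c \<odot>\<^bsub>M\<^esub> x)"
      using assms(2,3) by (simp add: kscal_mult_left[where A = A, symmetric] lsmult_assoc1)
  next
    show "(\<lambda>c. kscal (\<mu> c) \<odot>\<^bsub>M\<^esub> (P c \<odot>\<^bsub>M\<^esub> x)) \<in> C \<rightarrow> carrier M"
      using assms(2,3) by (simp add: lsmult_closed)
  qed
  finally show ?thesis .
qed

lemma euler_poly_lsmult_nonzero: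
  assumes no_eigenvector: "\<And>c u. u \<in> gr a \<Longrightarrow> u \<noteq> \<zero>\<^bsub>M\<^esub> \<Longrightarrow> euler_poly j [:-c, 1:] \<odot>\<^bsub>M\<^esub> u \<noteq> \<zero>\<^bsub>M\<^esub>"
  shows "q \<noteq> 0 \<Longrightarrow> u \<in> gr a \<Longrightarrow> u \<noteq> \<zero>\<^bsub>M\<^esub> \<Longrightarrow> euler_poly j q \<odot>\<^bsub>M\<^esub> u \<noteq> \<zero>\<^bsub>M\<^esub>"
proof (induct "degree q" arbitrary: q u rule: less_induct)
  case less
  have uc: "u \<in> carrier M"
    using less(3) by (rule homogeneous_in_carrier)
  show ?case
  proof (cases "degree q = 0")
    case True
    then obtain c where q: "q = [:c:]" "c \<noteq> 0"
      using less(2) by (metis degree_eq_zeroE pCons_0_0)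
    then show ?thesis
      using kscal_lsmult_inverse[OF q(2) uc] less(4) uc
      by (auto simp: kscal_eq_euler_poly[symmetric])
  next
    case False
    then obtain r where "poly q r = 0"
      using fundamental_theorem_of_algebra_alt by (metis degree_pCons_0)
    then obtain q' where q': "q = [:-r, 1:] * q'"
      using poly_eq_0_iff_dvd by (metis dvdE)
    with less(2) have "q' \<noteq> 0"
      by auto
    moreover have "degree q' < degree q"
      using \<open>q' \<noteq> 0\<close> unfolding q' by (subst degree_mult_eq) auto
    ultimately have "euler_poly j q' \<odot>\<^bsub>M\<^esub> u \<noteq> \<zero>\<^bsub>M\<^esub>"
      using less by blast
    moreover have "euler_poly j q' \<odot>\<^bsub>M\<^esub> u \<in> gr a"
      using lsmult_diagonal_homogeneous[OF _ diagonal_euler_poly less(3)] by simp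
    moreover have "euler_poly j q \<odot>\<^bsub>M\<^esub> u = euler_poly j [:-r, 1:] \<odot>\<^bsub>M\<^esub> (euler_poly j q' \<odot>\<^bsub>M\<^esub> u)"
      using uc by (simp only: q' euler_poly_mult) (simp add: lsmult_assoc1)
    ultimately show ?thesis
      using no_eigenvector by simp
  qed
qed

lemma euler_poly_Lagrange_lsmult:
  assumes C: "finite C" and v: "v \<in> carrier M"
    and Q: "\<And>c. c \<in> C \<Longrightarrow> Q c \<in> carrier (DR A)" "\<And>c. c \<in> C \<Longrightarrow> diagonal (Q c)"
      "\<And>c. c \<in> C \<Longrightarrow> v = Q c \<odot>\<^bsub>M\<^esub> (euler_poly j [:-c, 1:] \<odot>\<^bsub>M\<^esub> v)"
  shows "euler_poly j (\<Sum>c\<in>C. smult (\<mu> c) (\<Prod>k\<in>C - {c}. [:-k, 1:])) \<odot>\<^bsub>M\<^esub> v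
    = (\<Sum>c\<in>C. kscale (\<mu> c) (Q c)) \<odot>\<^bsub>M\<^esub> (euler_poly j (\<Prod>k\<in>C. [:-k, 1:]) \<odot>\<^bsub>M\<^esub> v)"
    (is "_ = _ \<odot>\<^bsub>M\<^esub> ?Rv")
proof -
  let ?L = "\<lambda>c. euler_poly j (\<Prod>k\<in>C - {c}. [:-k, 1:])"
  have Rv: "?Rv \<in> carrier M"
    using v by (simp add: lsmult_closed)
  have L: "?L c \<odot>\<^bsub>M\<^esub> v = Q c \<odot>\<^bsub>M\<^esub> ?Rv" if c: "c \<in> C" for c
  proof -
    have lin: "euler_poly j [:-c, 1:] \<odot>\<^bsub>M\<^esub> v \<in> carrier M"
      using v by (simp add: lsmult_closed)
    have "(\<Prod>k\<in>C. [:-k, 1:]) = (\<Prod>k\<in>C - {c}. [:-k, 1:]) * [:-c, 1:]"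
      using C c by (simp add: prod.remove mult.commute)
    then have "euler_poly j (\<Prod>k\<in>C. [:-k, 1:]) = ?L c \<otimes>\<^bsub>DR A\<^esub> euler_poly j [:-c, 1:]"
      by (simp only: euler_poly_mult)
    then have "Q c \<odot>\<^bsub>M\<^esub> ?Rv = Q c \<odot>\<^bsub>M\<^esub> (?L c \<odot>\<^bsub>M\<^esub> (euler_poly j [:-c, 1:] \<odot>\<^bsub>M\<^esub> v))"
      using v by (simp add: lsmult_assoc1)
    also have "\<dots> = ?L c \<odot>\<^bsub>M\<^esub> (Q c \<odot>\<^bsub>M\<^esub> (euler_poly j [:-c, 1:] \<odot>\<^bsub>M\<^esub> v))"
      using Q c lin by (intro lsmult_diagonal_commute diagonal_euler_poly euler_poly_in_DR) auto
    also have "\<dots> = ?L c \<odot>\<^bsub>M\<^esub> v"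
      using Q(3)[OF c] by simp
    finally show ?thesis
      by simp
  qed
  have "euler_poly j (\<Sum>c\<in>C. smult (\<mu> c) (\<Prod>k\<in>C - {c}. [:-k, 1:])) \<odot>\<^bsub>M\<^esub> v
      = finsum M (\<lambda>c. kscal (\<mu> c) \<odot>\<^bsub>M\<^esub> (?L c \<odot>\<^bsub>M\<^esub> v)) C"
    unfolding euler_poly_lincomb using C v by (intro lincomb_lsmult) auto
  also have "\<dots> = finsum M (\<lambda>c. kscal (\<mu> c) \<odot>\<^bsub>M\<^esub> (Q c \<odot>\<^bsub>M\<^esub> ?Rv)) C"
    using L v Q(1) Rv by (intro M.finsum_cong') (auto simp: lsmult_closed)
  also have "\<dots> = (\<Sum>c\<in>C. kscale (\<mu> c) (Q c)) \<odot>\<^bsub>M\<^esub> ?Rv"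
    using C Q(1) Rv by (intro lincomb_lsmult[symmetric]) auto
  finally show ?thesis .
qed

lemma homogeneous_eigenvector_eigenspace:
  assumes u: "u \<in> gr a" "u \<noteq> \<zero>\<^bsub>M\<^esub>" and eigen: "euler_poly j [:-c, 1:] \<odot>\<^bsub>M\<^esub> u = \<zero>\<^bsub>M\<^esub>"
    and w: "w \<in> gr a"
  shows "euler j \<odot>\<^bsub>M\<^esub> w = kscal c \<odot>\<^bsub>M\<^esub> w"
proof -
  obtain Q where Q: "Q \<in> carrier (DR A)" "diagonal Q" "w = Q \<odot>\<^bsub>M\<^esub> u"
    using nonzero_homogeneous_generates_diagonal[OF u w] by blast
  have uc: "u \<in> carrier M" and wc: "w \<in> carrier M"
    using u(1) w by (simp_all add: homogeneous_in_carrier)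
  have "euler_poly j [:-c, 1:] \<odot>\<^bsub>M\<^esub> w = Q \<odot>\<^bsub>M\<^esub> (euler_poly j [:-c, 1:] \<odot>\<^bsub>M\<^esub> u)"
    using Q uc by (simp add: lsmult_diagonal_commute diagonal_euler_poly)
  then have "euler_poly j [:-c, 1:] \<odot>\<^bsub>M\<^esub> w = \<zero>\<^bsub>M\<^esub>"
    using eigen Q(1) by simp
  then show ?thesis
    using wc by (simp add: euler_eq_euler_poly_add_kscal[where c = c and A = A] lsmult_l_distr lsmult_closed)
qed

(*
  Dixmier's argument: if no s_j - c had a kernel on M_a, then v = Q_c (s_j - c) v for diagonal
  operators Q_c. Uncountably many Q_c in the span of the countably many monomials s^k satisfy a
  linear relation, and applying it to prod_c (s_j - c) v yields a nonzero polynomial in s_j that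
  kills v, contradicting euler_poly_lsmult_nonzero.
*)

lemma exists_homogeneous_eigenvector:
  assumes v: "v \<in> gr a" "v \<noteq> \<zero>\<^bsub>M\<^esub>"
  shows "\<exists>c u. u \<in> gr a \<and> u \<noteq> \<zero>\<^bsub>M\<^esub> \<and> euler_poly j [:-c, 1:] \<odot>\<^bsub>M\<^esub> u = \<zero>\<^bsub>M\<^esub>"
proof (rule ccontr)
  assume "\<not> ?thesis"
  then have no_eigenvector:
    "\<And>c u. u \<in> gr a \<Longrightarrow> u \<noteq> \<zero>\<^bsub>M\<^esub> \<Longrightarrow> euler_poly j [:-c, 1:] \<odot>\<^bsub>M\<^esub> u \<noteq> \<zero>\<^bsub>M\<^esub>"
    by blast
  have "\<exists>Q\<in>carrier (DR A). diagonal Q \<and> v = Q \<odot>\<^bsub>M\<^esub> (euler_poly j [:-c, 1:] \<odot>\<^bsub>M\<^esub> v)" for c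
    using nonzero_homogeneous_generates_diagonal[OF _ no_eigenvector[OF v] v(1)]
      lsmult_diagonal_homogeneous[OF _ diagonal_euler_poly v(1)]
    by simp
  then obtain Q where Q: "\<And>c. Q c \<in> carrier (DR A)" "\<And>c. diagonal (Q c)"
    "\<And>c. v = Q c \<odot>\<^bsub>M\<^esub> (euler_poly j [:-c, 1:] \<odot>\<^bsub>M\<^esub> v)"
    by metis
  have "range Q \<subseteq> kern.span (range euler_monomial)"
    using diagonal_in_span_euler_monomial Q(1,2) by blast
  moreover have "countable (range (euler_monomial :: ('n \<Rightarrow> nat) \<Rightarrow> 'n kern))"
    by (intro countable_image countableI_type)
  ultimately have "\<exists>C \<mu> c0. finite C \<and> c0 \<in> C \<and> \<mu> c0 \<noteq> 0 \<and> (\<Sum>c\<in>C. kscale (\<mu> c) (Q c)) = 0"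
    by (intro kern.uncountable_family_relation uncountable_UNIV_complex)
  then obtain C \<mu> c0 where C: "finite C" "c0 \<in> C" "\<mu> c0 \<noteq> 0"
    and "(\<Sum>c\<in>C. kscale (\<mu> c) (Q c)) = 0"
    by blast
  then have "(\<Sum>c\<in>C. kscale (\<mu> c) (Q c)) = \<zero>\<^bsub>DR A\<^esub>"
    by (simp add: DR_zero zero_fun_def)
  then have "euler_poly j (\<Sum>c\<in>C. smult (\<mu> c) (\<Prod>k\<in>C - {c}. [:-k, 1:])) \<odot>\<^bsub>M\<^esub> v = \<zero>\<^bsub>M\<^esub>"
    using euler_poly_Lagrange_lsmult[OF C(1) homogeneous_in_carrier[OF v(1)] Q]
      homogeneous_in_carrier[OF v(1)]
    by (simp add: lsmult_closed)
  moreover have "(\<Sum>c\<in>C. smult (\<mu> c) (\<Prod>k\<in>C - {c}. [:-k, 1:])) \<noteq> 0"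
    using C by (rule Lagrange_combination_nonzero)
  ultimately show False
    using euler_poly_lsmult_nonzero[OF no_eigenvector _ v] by blast
qed

lemma euler_acts_by_scalar:
  assumes "v \<in> gr a" "v \<noteq> \<zero>\<^bsub>M\<^esub>"
  shows "\<exists>c. \<forall>w\<in>gr a. euler j \<odot>\<^bsub>M\<^esub> w = kscal c \<odot>\<^bsub>M\<^esub> w"
  using exists_homogeneous_eigenvector[OF assms] homogeneous_eigenvector_eigenspace by blast

lemma exists_homogeneous_weight_vector:
  "\<exists>a v \<alpha>. v \<in> gr a \<and> v \<noteq> \<zero>\<^bsub>M\<^esub> \<and> (\<forall>j. euler j \<odot>\<^bsub>M\<^esub> v = kscal (\<alpha> j) \<odot>\<^bsub>M\<^esub> v)"
proof -
  obtain a v where v: "v \<in> gr a" "v \<noteq> \<zero>\<^bsub>M\<^esub>"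
    using exists_nonzero_homogeneous by blast
  then have "\<forall>j. \<exists>c. euler j \<odot>\<^bsub>M\<^esub> v = kscal c \<odot>\<^bsub>M\<^esub> v"
    using euler_acts_by_scalar by blast
  then show ?thesis
    using v by metis
qed

lemma euler_lsmult_homogeneous:
  assumes v: "v \<in> gr a0" "v \<noteq> \<zero>\<^bsub>M\<^esub>" and weight: "euler j \<odot>\<^bsub>M\<^esub> v = kscal \<alpha> \<odot>\<^bsub>M\<^esub> v"
    and w: "w \<in> gr a"
  shows "euler j \<odot>\<^bsub>M\<^esub> w = kscal (\<alpha> + of_int (a j - a0 j)) \<odot>\<^bsub>M\<^esub> w"
proof -
  obtain P where P: "P \<in> carrier (DR A)" "ksupp P \<subseteq> {vsub a a0}" "w = P \<odot>\<^bsub>M\<^esub> v"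
    using nonzero_homogeneous_generates_homogeneous[OF v w] by blast
  have vc: "v \<in> carrier M"
    using v(1) by (rule homogeneous_in_carrier)
  let ?b = "of_int (vsub a a0 j) :: complex"
  have "euler j \<odot>\<^bsub>M\<^esub> w = (euler j \<otimes>\<^bsub>DR A\<^esub> P) \<odot>\<^bsub>M\<^esub> v"
    using P(1,3) vc by (simp add: lsmult_assoc1)
  also have "\<dots> = P \<odot>\<^bsub>M\<^esub> ((euler j \<oplus>\<^bsub>DR A\<^esub> kscal ?b) \<odot>\<^bsub>M\<^esub> v)"
    using P(1) vc by (simp add: euler_mult_single_ksupp[OF P(2)] lsmult_assoc1)
  also have "\<dots> = P \<odot>\<^bsub>M\<^esub> (kscal (\<alpha> + ?b) \<odot>\<^bsub>M\<^esub> v)"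
    using vc weight by (simp add: lsmult_l_distr kscal_add)
  also have "\<dots> = kscal (\<alpha> + ?b) \<odot>\<^bsub>M\<^esub> w"
    using P vc by (simp add: lsmult_assoc1[symmetric] kscal_commute)
  finally show ?thesis
    by (simp add: vsub_def)
qed

lemma shifted_euler_lsmult_homogeneous:
  assumes v: "v \<in> gr a0" "v \<noteq> \<zero>\<^bsub>M\<^esub>" and weight: "euler j \<odot>\<^bsub>M\<^esub> v = kscal \<alpha> \<odot>\<^bsub>M\<^esub> v"
    and w: "w \<in> gr a"
  shows "(euler j \<ominus>\<^bsub>DR A\<^esub> kscal (\<alpha> + of_int (b j - a0 j))) \<odot>\<^bsub>M\<^esub> w = kscal (of_int (a j - b j)) \<odot>\<^bsub>M\<^esub> w"
proof -
  have "w \<in> carrier M"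
    using w by (rule homogeneous_in_carrier)
  then show ?thesis
    using euler_lsmult_homogeneous[OF v weight w]
    by (simp add: lsmult_l_diff kscal_lsmult_diff algebra_simps)
qed

lemma submodule_finsum_remove_component:
  assumes v: "v \<in> gr a0" "v \<noteq> \<zero>\<^bsub>M\<^esub>" and weight: "euler j \<odot>\<^bsub>M\<^esub> v = kscal \<alpha> \<odot>\<^bsub>M\<^esub> v"
    and W: "submodule W (DR A) M" and S: "finite S" "\<forall>a\<in>S. c a \<in> gr a" "finsum M c S \<in> W"
    and b: "b \<in> S"
  shows "finsum M (\<lambda>a. kscal (of_int (a j - b j)) \<odot>\<^bsub>M\<^esub> c a) (S - {b}) \<in> W"
proof -
  let ?E = "euler j \<ominus>\<^bsub>DR A\<^esub> kscal (\<alpha> + of_int (b j - a0 j))"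
  let ?c = "\<lambda>a. kscal (of_int (a j - b j)) \<odot>\<^bsub>M\<^esub> c a"
  have c: "\<forall>a\<in>S. c a \<in> carrier M"
    using S(2) homogeneous_in_carrier by blast
  have "?E \<odot>\<^bsub>M\<^esub> finsum M c S = finsum M (\<lambda>a. ?E \<odot>\<^bsub>M\<^esub> c a) S"
    using c S(1) by (intro lsmult_finsum) auto
  also have "\<dots> = finsum M ?c S"
    using S(2) c shifted_euler_lsmult_homogeneous[OF v weight]
    by (intro M.finsum_cong') (auto simp: lsmult_closed)
  also have "\<dots> = finsum M ?c (S - {b})"
    using c S(1) b M.finsum_insert[of "S - {b}" b ?c]
    by (simp add: insert_absorb kscal_zero lsmult_closed)
  finally show ?thesis
    using submodule.smult_closed[OF W _ S(3), of ?E] by simp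
qed

(*
  Induction on the number of components: if b <> a1 and b_j <> a1_j, the shifted Euler operator
  that kills the component of degree b multiplies the one of degree a1 by a1_j - b_j <> 0.
*)

lemma homogeneous_component_in_submodule:
  assumes v: "v \<in> gr a0" "v \<noteq> \<zero>\<^bsub>M\<^esub>" and weight: "\<And>j. euler j \<odot>\<^bsub>M\<^esub> v = kscal (\<alpha> j) \<odot>\<^bsub>M\<^esub> v"
    and W: "submodule W (DR A) M"
  shows "finite S \<Longrightarrow> \<forall>a\<in>S. c a \<in> gr a \<Longrightarrow> finsum M c S \<in> W \<Longrightarrow> a1 \<in> S \<Longrightarrow> c a1 \<in> W"
proof (induct "card S" arbitrary: S c rule: less_induct)
  case less
  show ?case
  proof (cases "S = {a1}")
    case True
    then show ?thesis
      using less(3,4) homogeneous_in_carrier by (simp add: M.finsum_singleton)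
  next
    case False
    then obtain b where "b \<in> S" "b \<noteq> a1"
      using less(5) by blast
    then obtain j where b: "b \<in> S" "b j \<noteq> a1 j"
      by auto
    let ?c = "\<lambda>a. kscal (of_int (a j - b j)) \<odot>\<^bsub>M\<^esub> c a"
    have "finsum M ?c (S - {b}) \<in> W"
      using submodule_finsum_remove_component[OF v weight W less(2-4) b(1)] .
    moreover have "\<forall>a\<in>S - {b}. ?c a \<in> gr a"
      using less(3) lsmult_diagonal_homogeneous[OF kscal_in_DR diagonal_kscal] by blast
    moreover have "card (S - {b}) < card S"
      using less(2) b(1) by (rule card_Diff1_less)
    ultimately have "?c a1 \<in> W"
      using less(1)[of "S - {b}" ?c] less(2,5) b by auto
    then have "kscal (inverse (of_int (a1 j - b j))) \<odot>\<^bsub>M\<^esub> ?c a1 \<in> W"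
      using W by (simp add: submodule.smult_closed)
    moreover have "kscal (inverse (of_int (a1 j - b j))) \<odot>\<^bsub>M\<^esub> ?c a1 = c a1"
      using b(2) less(3,5) homogeneous_in_carrier by (intro kscal_lsmult_inverse) auto
    ultimately show ?thesis
      by (simp only:)
  qed
qed

theorem simple_as_ungraded_module: "simple_module (DR A) M"
  unfolding simple_module_def
proof (intro conjI allI impI)
  show "carrier M \<noteq> {\<zero>\<^bsub>M\<^esub>}"
    using graded_simple by (simp add: graded_simple_def)
next
  fix N
  assume N: "submodule N (DR A) M"
  obtain a0 v \<alpha> where v: "v \<in> gr a0" "v \<noteq> \<zero>\<^bsub>M\<^esub>"
    and weight: "\<And>j. euler j \<odot>\<^bsub>M\<^esub> v = kscal (\<alpha> j) \<odot>\<^bsub>M\<^esub> v"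
    using exists_homogeneous_weight_vector by blast
  show "N = {\<zero>\<^bsub>M\<^esub>} \<or> N = carrier M"
  proof (cases "N = {\<zero>\<^bsub>M\<^esub>}")
    case False
    then obtain x where x: "x \<in> N" "x \<noteq> \<zero>\<^bsub>M\<^esub>"
      using submodule.axioms(1)[OF N] subgroup.one_closed by fastforce
    have NM: "N \<subseteq> carrier M"
      using submodule.axioms(1)[OF N] subgroup.subset by fastforce
    obtain c where c: "\<forall>a. c a \<in> gr a" "finite {a. c a \<noteq> \<zero>\<^bsub>M\<^esub>}" "x = finsum M c {a. c a \<noteq> \<zero>\<^bsub>M\<^esub>}"
      using homogeneous_decomposition[of x] x(1) NM by blast
    then obtain a1 where a1: "c a1 \<noteq> \<zero>\<^bsub>M\<^esub>"
      using x(2) by force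
    have "c a1 \<in> N"
      using homogeneous_component_in_submodule[OF v weight N c(2)] c(1,3) x(1) a1 by auto
    then have "carrier M \<subseteq> N"
      using nonzero_homogeneous_generates[OF c(1)[rule_format, of a1] a1]
        submodule.smult_closed[OF N] by blast
    then show ?thesis
      using NM by blast
  qed simp
qed

end

section \<open>Verma modules\<close>

lemma verma_ideal_eq_left_ideal_span:
  "verma_ideal A \<alpha> = left_ideal_span (DR A) (\<lambda>i. euler i \<ominus>\<^bsub>DR A\<^esub> kscal (\<alpha> i))"
  by (simp add: verma_ideal_def left_ideal_span_def)

lemma verma_carrier: "carrier (verma A \<alpha>) = a_rcosets\<^bsub>DR A\<^esub> (verma_ideal A \<alpha>)"
  by (simp add: verma_def quot_module_def regmod_def A_RCOSETS_def RCOSETS_def r_coset_def)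

lemma verma_add: "X \<oplus>\<^bsub>verma A \<alpha>\<^esub> Y = X <+>\<^bsub>DR A\<^esub> Y"
  by (simp add: verma_def quot_module_def regmod_def set_add_def set_mult_def)

lemma verma_zero: "\<zero>\<^bsub>verma A \<alpha>\<^esub> = verma_ideal A \<alpha>"
  by (simp add: verma_def quot_module_def)

lemma verma_smult:
  "r \<odot>\<^bsub>verma A \<alpha>\<^esub> X = verma_ideal A \<alpha> +>\<^bsub>DR A\<^esub> (r \<otimes>\<^bsub>DR A\<^esub> (SOME x. x \<in> X))"
  by (simp add: verma_def quot_module_def regmod_def a_r_coset_def r_coset_def)

locale weight_vector = left_module "DR A" M
  for A :: "('n::finite \<Rightarrow> int) set" and M :: "('n kern, 'm) module" +
  fixes v :: 'm and \<alpha> :: "'n \<Rightarrow> complex"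
  assumes simple: "simple_module (DR A) M"
    and v: "v \<in> carrier M" "v \<noteq> \<zero>\<^bsub>M\<^esub>"
    and weight: "\<And>j. euler j \<odot>\<^bsub>M\<^esub> v = kscal (\<alpha> j) \<odot>\<^bsub>M\<^esub> v"
begin

sublocale DR_ring A ..

lemma abelian_subgroup_verma_ideal: "abelian_subgroup (verma_ideal A \<alpha>) (DR A)"
  unfolding verma_ideal_eq_left_ideal_span by (rule abelian_subgroup_left_ideal_span) simp

sublocale I: abelian_subgroup "verma_ideal A \<alpha>" "DR A"
  by (rule abelian_subgroup_verma_ideal)

lemma lsmult_verma_ideal:
  assumes "P \<in> verma_ideal A \<alpha>"
  shows "P \<odot>\<^bsub>M\<^esub> v = \<zero>\<^bsub>M\<^esub>"
proof (rule lsmult_left_ideal_span[where E = "\<lambda>j. euler j \<ominus>\<^bsub>DR A\<^esub> kscal (\<alpha> j)"])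
  show "(euler j \<ominus>\<^bsub>DR A\<^esub> kscal (\<alpha> j)) \<odot>\<^bsub>M\<^esub> v = \<zero>\<^bsub>M\<^esub>" for j
    using v(1) by (simp add: lsmult_l_diff weight M.minus_eq M.r_neg lsmult_closed)
qed (use assms v(1) in \<open>simp_all add: verma_ideal_eq_left_ideal_span\<close>)

lemma verma_carrier_iff: "X \<in> carrier (verma A \<alpha>) \<longleftrightarrow> (\<exists>P\<in>carrier (DR A). X = verma_ideal A \<alpha> +>\<^bsub>DR A\<^esub> P)"
  by (auto simp: verma_carrier A_RCOSETS_def RCOSETS_def a_r_coset_def)

definition verma_map :: "'n kern set \<Rightarrow> 'm" where
  "verma_map X = (SOME P. P \<in> X) \<odot>\<^bsub>M\<^esub> v"

lemma verma_map_coset: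
  assumes P: "P \<in> carrier (DR A)"
  shows "verma_map (verma_ideal A \<alpha> +>\<^bsub>DR A\<^esub> P) = P \<odot>\<^bsub>M\<^esub> v"
proof -
  let ?Q = "SOME Q. Q \<in> verma_ideal A \<alpha> +>\<^bsub>DR A\<^esub> P"
  have "?Q \<in> verma_ideal A \<alpha> +>\<^bsub>DR A\<^esub> P"
    using I.a_rcos_self[OF P] by (auto simp: some_in_eq)
  then obtain h where h: "h \<in> verma_ideal A \<alpha>" "?Q = h \<oplus>\<^bsub>DR A\<^esub> P"
    by (auto simp: a_r_coset_def r_coset_def)
  have "h \<in> carrier (DR A)"
    using h(1) I.a_subset by blast
  then have "?Q \<odot>\<^bsub>M\<^esub> v = h \<odot>\<^bsub>M\<^esub> v \<oplus>\<^bsub>M\<^esub> P \<odot>\<^bsub>M\<^esub> v"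
    using h(2) P v(1) by (simp add: lsmult_l_distr)
  then show ?thesis
    using lsmult_verma_ideal[OF h(1)] P v(1) by (simp add: verma_map_def lsmult_closed)
qed

lemma comm_group_verma: "comm_group (add_monoid (verma A \<alpha>))"
proof (rule comm_group_cong[OF I.a_factorgroup_is_comm_group])
  show "carrier (add_monoid (verma A \<alpha>)) = carrier (DR A A_Mod verma_ideal A \<alpha>)"
    by (simp add: A_FactGroup_def FactGroup_def A_RCOSETS_def verma_carrier)
  show "monoid.mult (add_monoid (verma A \<alpha>)) = monoid.mult (DR A A_Mod verma_ideal A \<alpha>)"
    by (simp add: fun_eq_iff A_FactGroup_def FactGroup_def set_add_def verma_add)
  show "one (add_monoid (verma A \<alpha>)) = one (DR A A_Mod verma_ideal A \<alpha>)"
    by (simp add: A_FactGroup_def FactGroup_def verma_zero)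
qed

lemma group_hom_verma_map: "group_hom (add_monoid (verma A \<alpha>)) (add_monoid M) verma_map"
proof -
  have "verma_map X \<in> carrier M" if "X \<in> carrier (verma A \<alpha>)" for X
    using that v(1) by (auto simp: verma_carrier_iff verma_map_coset lsmult_closed)
  moreover have "verma_map (X \<oplus>\<^bsub>verma A \<alpha>\<^esub> Y) = verma_map X \<oplus>\<^bsub>M\<^esub> verma_map Y"
    if "X \<in> carrier (verma A \<alpha>)" "Y \<in> carrier (verma A \<alpha>)" for X Y
    using that v(1)
    by (auto simp: verma_carrier_iff verma_add I.a_rcos_sum verma_map_coset lsmult_l_distr)
  ultimately show ?thesis
    using comm_group.axioms(2)[OF comm_group_verma] M.a_group
    by (simp add: group_hom_def group_hom_axioms_def hom_def)
qed

lemma verma_map_smult: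
  assumes r: "r \<in> carrier (DR A)" and X: "X \<in> carrier (verma A \<alpha>)"
  shows "r \<odot>\<^bsub>verma A \<alpha>\<^esub> X \<in> carrier (verma A \<alpha>) \<and>
    verma_map (r \<odot>\<^bsub>verma A \<alpha>\<^esub> X) = r \<odot>\<^bsub>M\<^esub> verma_map X"
proof -
  obtain P where P: "P \<in> carrier (DR A)" "X = verma_ideal A \<alpha> +>\<^bsub>DR A\<^esub> P"
    using X by (auto simp: verma_carrier_iff)
  let ?Q = "SOME Q. Q \<in> X"
  have "?Q \<in> X"
    by (rule someI[of "\<lambda>Q. Q \<in> X" P]) (use I.a_rcos_self[OF P(1)] P(2) in simp)
  moreover have "X \<subseteq> carrier (DR A)"
    using R.a_r_coset_subset_G[OF I.a_subset P(1)] P(2) by simp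
  ultimately have Q: "?Q \<in> carrier (DR A)"
    by blast
  then have rQ: "r \<otimes>\<^bsub>DR A\<^esub> ?Q \<in> carrier (DR A)"
    using r by simp
  have "r \<odot>\<^bsub>verma A \<alpha>\<^esub> X = verma_ideal A \<alpha> +>\<^bsub>DR A\<^esub> (r \<otimes>\<^bsub>DR A\<^esub> ?Q)"
    by (rule verma_smult)
  moreover have "verma_map X = ?Q \<odot>\<^bsub>M\<^esub> v"
    by (simp add: verma_map_def)
  ultimately show ?thesis
    using rQ Q r v(1) by (auto simp: verma_carrier_iff verma_map_coset lsmult_assoc1)
qed

lemma verma_map_onto: "verma_map ` carrier (verma A \<alpha>) = carrier M"
proof
  show "verma_map ` carrier (verma A \<alpha>) \<subseteq> carrier M"
    using group_hom.hom_closed[OF group_hom_verma_map] by auto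
next
  have generated: "{P \<odot>\<^bsub>M\<^esub> v | P. P \<in> carrier (DR A)} = carrier M"
  proof -
    have "v \<in> {P \<odot>\<^bsub>M\<^esub> v | P. P \<in> carrier (DR A)}"
      using lsmult_one[OF v(1)] R.one_closed by force
    then show ?thesis
      using simple cyclic_submodule[OF v(1)] v(2) by (auto simp: simple_module_def)
  qed
  show "carrier M \<subseteq> verma_map ` carrier (verma A \<alpha>)"
  proof
    fix x
    assume "x \<in> carrier M"
    then obtain P where P: "P \<in> carrier (DR A)" "x = P \<odot>\<^bsub>M\<^esub> v"
      using generated by blast
    then have "verma_ideal A \<alpha> +>\<^bsub>DR A\<^esub> P \<in> carrier (verma A \<alpha>)"
      by (auto simp: verma_carrier_iff)
    then show "x \<in> verma_map ` carrier (verma A \<alpha>)"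
      using P by (auto simp: verma_map_coset intro!: image_eqI)
  qed
qed

theorem simple_quotient_of_verma:
  "\<exists>N f. maximal_submodule (DR A) (verma A \<alpha>) N \<and> module_iso (DR A) (quot_module (verma A \<alpha>) N) M f"
  using kernel_maximal_submodule[OF group_hom_verma_map verma_map_onto verma_map_smult
      left_module_axioms simple]
    quot_module_kernel_iso[OF group_hom_verma_map verma_map_onto verma_map_smult]
  by blast

end

theorem proposition4p5:
  fixes A :: "('n::finite \<Rightarrow> int) set"
    and M :: "('n kern, 'm) module"
    and gr :: "('n \<Rightarrow> int) \<Rightarrow> 'm set"
  assumes "generates_Zd A"
    and "graded_simple A M gr"
  shows "\<exists>(\<alpha> :: 'n \<Rightarrow> complex) N f.
           maximal_submodule (DR A) (verma A \<alpha>) N \<and>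
           module_iso (DR A) (quot_module (verma A \<alpha>) N) M f"
proof -
  interpret graded_simple_module A M gr
    by (rule graded_simple_module.intro) (rule assms(2))
  obtain a v \<alpha> where v: "v \<in> gr a" "v \<noteq> \<zero>\<^bsub>M\<^esub>"
    and weight: "\<And>j. euler j \<odot>\<^bsub>M\<^esub> v = kscal (\<alpha> j) \<odot>\<^bsub>M\<^esub> v"
    using exists_homogeneous_weight_vector by blast
  interpret weight_vector A M v \<alpha>
    using simple_as_ungraded_module homogeneous_in_carrier[OF v(1)] v(2) weight
    by (intro weight_vector.intro left_module_axioms weight_vector_axioms.intro)
  show ?thesis
    using simple_quotient_of_verma by blast
qed

end
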